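(* Let $|\Psi\rangle$ be a pure state and $\sigma$ a density operator on a finite-dimensional Hilbert space, $H$ Hermitian, and $0<\epsilon$ with $\||\Psi\rangle\langle\Psi|-\sigma\|_1\le\epsilon$. Then the eigenvector $|\Phi\rangle$ of $\sigma$ with the largest eigenvalue satisfies $|\langle\Psi|\Phi\rangle|^2\ge1-\epsilon$ and $$P_H(\sigma)\ge V_H(\Phi)\,(2\epsilon^{-1}-3).$$
   Context: $V_H(\Phi)=\langle\Phi|H^2|\Phi\rangle-\langle\Phi|H|\Phi\rangle^2$. Purity of coherence: $P_H(\sigma)=\mathrm{Tr}(H\sigma^2H\sigma^{-1})-\mathrm{Tr}(\sigma H^2)$ ($\sigma^{-1}$ inverse on the support) if $\mathrm{supp}(H\sigma H)\subseteq\mathrm{supp}(\sigma)$, else $\infty$. *)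

theory Defs
  imports "Jordan_Normal_Form.Schur_Decomposition" "HOL-Library.Extended_Real"
begin

text \<open>Finite-dimensional Hilbert space C^n; operators are n x n complex matrices.\<close>

definition mtrace :: "complex mat \<Rightarrow> complex" where
  "mtrace A = (\<Sum>i<dim_row A. A $$ (i,i))"

definition hermitian_mat :: "nat \<Rightarrow> complex mat \<Rightarrow> bool" where
  "hermitian_mat n A \<longleftrightarrow> A \<in> carrier_mat n n \<and> mat_adjoint A = A"

definition psd_mat :: "nat \<Rightarrow> complex mat \<Rightarrow> bool" where
  "psd_mat n A \<longleftrightarrow> hermitian_mat n A \<and>
     (\<forall>v \<in> carrier_vec n. 0 \<le> Re ((A *\<^sub>v v) \<bullet>c v))"

definition density_op :: "nat \<Rightarrow> complex mat \<Rightarrow> bool" where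
  "density_op n \<sigma> \<longleftrightarrow> psd_mat n \<sigma> \<and> mtrace \<sigma> = 1"

definition unit_state :: "nat \<Rightarrow> complex vec \<Rightarrow> bool" where
  "unit_state n \<psi> \<longleftrightarrow> \<psi> \<in> carrier_vec n \<and> \<psi> \<bullet>c \<psi> = 1"

definition ket_bra :: "complex vec \<Rightarrow> complex mat" where
  "ket_bra \<psi> = mat (dim_vec \<psi>) (dim_vec \<psi>) (\<lambda>(i,j). \<psi> $ i * cnj (\<psi> $ j))"

definition abs_mat :: "complex mat \<Rightarrow> complex mat" where
  "abs_mat A = (THE B. psd_mat (dim_col A) B \<and> B * B = mat_adjoint A * A)"

definition trace_norm :: "complex mat \<Rightarrow> real" where
  "trace_norm A = Re (mtrace (abs_mat A))"

definition mat_support :: "complex mat \<Rightarrow> complex vec set" where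
  "mat_support A = {A *\<^sub>v v | v. v \<in> carrier_vec (dim_col A)}"

text \<open>inverse on the support: for Hermitian sigma this is the Moore-Penrose pseudoinverse\<close>
definition supp_inv :: "complex mat \<Rightarrow> complex mat" where
  "supp_inv A = (THE X. X \<in> carrier_mat (dim_col A) (dim_row A) \<and>
      A * X * A = A \<and> X * A * X = X \<and>
      mat_adjoint (A * X) = A * X \<and> mat_adjoint (X * A) = X * A)"

definition variance_H :: "complex mat \<Rightarrow> complex vec \<Rightarrow> real" where
  "variance_H H \<phi> = Re (((H * H) *\<^sub>v \<phi>) \<bullet>c \<phi> - ((H *\<^sub>v \<phi>) \<bullet>c \<phi>)^2)"

definition purity_coh :: "complex mat \<Rightarrow> complex mat \<Rightarrow> ereal" where
  "purity_coh H \<sigma> = (if mat_support (H * \<sigma> * H) \<subseteq> mat_support \<sigma>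
     then ereal (Re (mtrace (H * \<sigma> * \<sigma> * H * supp_inv \<sigma>) - mtrace (\<sigma> * (H * H))))
     else \<infinity>)"

end

theory Submission
  imports Defs
begin

text \<open>
  Diagonalise \<open>\<sigma> = \<Sum> p\<^sub>i |u\<^sub>i\<rangle>\<langle>u\<^sub>i|\<close> with \<open>u\<^sub>0 = \<Phi>\<close>, so that \<open>p\<^sub>0\<close> is the largest eigenvalue.
  A traceless Hermitian operator has expectation values of modulus at most half its trace norm, so
  \<open>|\<langle>x|\<Psi>\<rangle>|\<^sup>2\<close> and \<open>\<langle>x|\<sigma>|x\<rangle>\<close> differ by at most \<open>\<epsilon>/2\<close> for every unit vector \<open>x\<close>.
  Taking \<open>x = \<Psi>\<close> gives \<open>p\<^sub>0 \<ge> 1 - \<epsilon>/2\<close>; taking \<open>x = \<Phi>\<close> then gives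
  \<open>|\<langle>\<Psi>|\<Phi>\<rangle>|\<^sup>2 \<ge> p\<^sub>0 - \<epsilon>/2 \<ge> 1 - \<epsilon>\<close>.

  With \<open>a i j = |\<langle>u\<^sub>i|H|u\<^sub>j\<rangle>|\<^sup>2\<close> the variance is \<open>V\<^sub>H(\<Phi>) = \<Sum>\<^sub>j a 0 j - a 0 0\<close>, and the purity of
  coherence is \<open>\<Sum>\<^sub>i\<^sub>j a i j (p\<^sub>j\<^sup>2/p\<^sub>i - p\<^sub>j)\<close>, which by the symmetry of \<open>a\<close> is half the sum of the terms
  \<open>a i j (p\<^sub>j\<^sup>2/p\<^sub>i + p\<^sub>i\<^sup>2/p\<^sub>j - p\<^sub>i - p\<^sub>j)\<close>. The support condition makes the terms with a zero
  weight vanish, and all remaining terms are nonnegative. Keeping only those with \<open>i = 0\<close> or \<open>j = 0\<close>,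
  the constraints \<open>p\<^sub>0 \<ge> 1 - \<epsilon>/2\<close> and \<open>p\<^sub>0 + p\<^sub>j \<le> 1\<close> bound each coefficient of \<open>a 0 j\<close> below
  by \<open>2/\<epsilon> - 3\<close>.
\<close>

lemma mat_adjoint_dim [simp]:
  "dim_row (mat_adjoint A) = dim_col A" "dim_col (mat_adjoint A) = dim_row A"
  unfolding mat_adjoint_def by (simp_all add: mat_of_rows_def)

lemma mat_adjoint_carrier [simp]: "A \<in> carrier_mat n m \<Longrightarrow> mat_adjoint A \<in> carrier_mat m n"
  unfolding carrier_mat_def by simp

lemma mat_adjoint_index [simp]:
  assumes "i < dim_col A" and "j < dim_row A"
  shows "mat_adjoint A $$ (i,j) = cnj (A $$ (j,i))"
  using assms unfolding mat_adjoint_def by (simp add: mat_of_rows_index)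

lemma index_mult_mat_sum:
  assumes "A \<in> carrier_mat n k" "B \<in> carrier_mat k m" "i < n" "j < m"
  shows "(A * B) $$ (i,j) = (\<Sum>a<k. A $$ (i,a) * B $$ (a,j))"
  using assms by (simp add: scalar_prod_def atLeast0LessThan)

lemma index_mult_mat_vec_sum:
  assumes "A \<in> carrier_mat n k" "v \<in> carrier_vec k" "i < n"
  shows "(A *\<^sub>v v) $ i = (\<Sum>a<k. A $$ (i,a) * v $ a)"
  using assms by (simp add: scalar_prod_def atLeast0LessThan)

lemma cscalar_prod_sum:
  assumes "v \<in> carrier_vec n" "w \<in> carrier_vec n"
  shows "v \<bullet>c w = (\<Sum>a<n. v $ a * cnj (w $ a))"
  using assms by (simp add: scalar_prod_def atLeast0LessThan)

lemma mat_adjoint_adjoint [simp]: "mat_adjoint (mat_adjoint A) = (A :: complex mat)"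
  by (rule eq_matI) simp_all

lemma mat_adjoint_mult:
  assumes A: "A \<in> carrier_mat n k" and B: "B \<in> carrier_mat k m"
  shows "mat_adjoint (A * B) = mat_adjoint B * mat_adjoint (A :: complex mat)"
proof (rule eq_matI)
  fix i j assume "i < dim_row (mat_adjoint B * mat_adjoint A)" "j < dim_col (mat_adjoint B * mat_adjoint A)"
  with A B have i: "i < m" and j: "j < n" by auto
  have "mat_adjoint (A * B) $$ (i, j) = cnj ((A * B) $$ (j,i))"
    using A B i j by (intro mat_adjoint_index) auto
  also have "\<dots> = cnj (\<Sum>a<k. A $$ (j,a) * B $$ (a,i))"
    by (subst index_mult_mat_sum[OF A B j i]) (rule refl)
  also have "\<dots> = (\<Sum>a<k. mat_adjoint B $$ (i,a) * mat_adjoint A $$ (a,j))"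
    unfolding cnj_sum by (rule sum.cong) (use A B i j in \<open>auto simp: mult.commute\<close>)
  also have "\<dots> = (mat_adjoint B * mat_adjoint A) $$ (i, j)"
    by (rule index_mult_mat_sum[symmetric]) (use A B i j in auto)
  finally show "mat_adjoint (A * B) $$ (i, j) = (mat_adjoint B * mat_adjoint A) $$ (i, j)" .
qed (use A B in auto)

lemma mat_adjoint_minus:
  assumes "A \<in> carrier_mat n m" "B \<in> carrier_mat n m"
  shows "mat_adjoint (A - B) = mat_adjoint A - mat_adjoint (B :: complex mat)"
  by (rule eq_matI) (use assms in auto)

lemma mat_adjoint_one [simp]: "mat_adjoint (1\<^sub>m n :: complex mat) = 1\<^sub>m n"
  by (rule eq_matI) auto

lemma cscalar_prod_mat_adjoint:
  fixes w :: "complex vec"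
  assumes A: "A \<in> carrier_mat n m" and v: "v \<in> carrier_vec m" and w: "w \<in> carrier_vec n"
  shows "(A *\<^sub>v v) \<bullet>c w = v \<bullet>c (mat_adjoint A *\<^sub>v w)"
proof -
  have Av: "A *\<^sub>v v \<in> carrier_vec n" and Aw: "mat_adjoint A *\<^sub>v w \<in> carrier_vec m"
    using A v mult_mat_vec_carrier[OF mat_adjoint_carrier[OF A] w] by auto
  have "(A *\<^sub>v v) \<bullet>c w = (\<Sum>i<n. (\<Sum>a<m. A $$ (i, a) * v $ a) * cnj (w $ i))"
    unfolding cscalar_prod_sum[OF Av w] by (rule sum.cong[OF refl], subst index_mult_mat_vec_sum[OF A v], auto)
  also have "\<dots> = (\<Sum>a<m. \<Sum>i<n. v $ a * cnj (cnj (A $$ (i, a)) * w $ i))"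
    by (subst sum.swap) (simp add: sum_distrib_right sum_distrib_left mult_ac)
  also have "\<dots> = (\<Sum>a<m. v $ a * cnj (\<Sum>i<n. mat_adjoint A $$ (a, i) * w $ i))"
    unfolding cnj_sum sum_distrib_left by (rule sum.cong[OF refl], rule sum.cong[OF refl], use A in simp)
  also have "\<dots> = v \<bullet>c (mat_adjoint A *\<^sub>v w)"
    unfolding cscalar_prod_sum[OF v Aw]
    by (rule sum.cong[OF refl], subst index_mult_mat_vec_sum[OF _ w], use A in auto)
  finally show ?thesis .
qed

lemma cscalar_prod_self:
  fixes v :: "complex vec"
  assumes "v \<in> carrier_vec n"
  shows "v \<bullet>c v = of_real (\<Sum>a<n. (cmod (v $ a))^2)"
  unfolding cscalar_prod_sum[OF assms assms] of_real_sum
  by (rule sum.cong[OF refl], rule complex_norm_square[symmetric])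

lemma cscalar_prod_self_real:
  fixes v :: "complex vec"
  shows "v \<in> carrier_vec n \<Longrightarrow> v \<bullet>c v = of_real (Re (v \<bullet>c v))"
  by (subst (1 2) cscalar_prod_self) auto

lemma cscalar_prod_self_nonneg:
  fixes v :: "complex vec"
  shows "v \<in> carrier_vec n \<Longrightarrow> 0 \<le> Re (v \<bullet>c v)"
  by (subst cscalar_prod_self) (auto intro: sum_nonneg)

lemma cscalar_prod_self_eq_0:
  fixes v :: "complex vec"
  assumes "v \<in> carrier_vec n" and "Re (v \<bullet>c v) = 0"
  shows "v = 0\<^sub>v n"
  using assms cscalar_prod_self_real[OF assms(1)] by simp

lemma cscalar_prod_cnj_commute:
  fixes v w :: "complex vec"
  assumes "v \<in> carrier_vec n" "w \<in> carrier_vec n"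
  shows "v \<bullet>c w = cnj (w \<bullet>c v)"
  using assms by (simp add: cscalar_prod_sum cnj_sum mult.commute)

lemma cscalar_prod_smult:
  fixes v w :: "complex vec"
  assumes "v \<in> carrier_vec n" "w \<in> carrier_vec n"
  shows "(a \<cdot>\<^sub>v v) \<bullet>c (b \<cdot>\<^sub>v w) = a * cnj b * (v \<bullet>c w)"
  using assms by (simp add: cscalar_prod_sum sum_distrib_left mult_ac)

lemma cscalar_prod_smult_left:
  fixes v w :: "complex vec"
  assumes "v \<in> carrier_vec n" "w \<in> carrier_vec n"
  shows "(a \<cdot>\<^sub>v v) \<bullet>c w = a * (v \<bullet>c w)"
  using cscalar_prod_smult[OF assms, of a 1] assms by simp

lemma cscalar_prod_minus:
  fixes a b v :: "complex vec"
  assumes "a \<in> carrier_vec n" "b \<in> carrier_vec n" "v \<in> carrier_vec n"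
  shows "(a - b) \<bullet>c v = a \<bullet>c v - b \<bullet>c v"
proof -
  have "a - b \<in> carrier_vec n" using assms by simp
  then show ?thesis
    using assms by (simp add: cscalar_prod_sum[of _ n] sum_subtractf algebra_simps)
qed

lemma hermitian_mat_index:
  "hermitian_mat n A \<Longrightarrow> i < n \<Longrightarrow> j < n \<Longrightarrow> A $$ (i,j) = cnj (A $$ (j,i))"
  unfolding hermitian_mat_def by (metis mat_adjoint_index carrier_matD)

lemma adjoint_mult_self_index:
  fixes U :: "complex mat"
  assumes U: "U \<in> carrier_mat n m" and "i < m" "j < m"
  shows "(mat_adjoint U * U) $$ (i,j) = col U j \<bullet>c col U i"
proof -
  have "(mat_adjoint U * U) $$ (i,j) = (\<Sum>a<n. col U j $ a * cnj (col U i $ a))"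
    unfolding index_mult_mat_sum[OF mat_adjoint_carrier[OF U] U assms(2,3)]
    by (rule sum.cong, use assms in \<open>auto simp: mult.commute\<close>)
  also have "\<dots> = col U j \<bullet>c col U i"
    by (rule cscalar_prod_sum[symmetric]) (use U in auto)
  finally show ?thesis .
qed


definition unitary_mat :: "nat \<Rightarrow> complex mat \<Rightarrow> bool" where
  "unitary_mat n U \<longleftrightarrow> U \<in> carrier_mat n n \<and> mat_adjoint U * U = 1\<^sub>m n"

lemma unitary_matD:
  assumes "unitary_mat n U"
  shows "U \<in> carrier_mat n n" "mat_adjoint U \<in> carrier_mat n n"
    "mat_adjoint U * U = 1\<^sub>m n" "U * mat_adjoint U = 1\<^sub>m n"
  using assms mat_mult_left_right_inverse[of "mat_adjoint U" n U] unfolding unitary_mat_def by auto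

lemma unitary_mat_cancel:
  assumes U: "unitary_mat n U" and X: "X \<in> carrier_mat n n"
  shows "mat_adjoint U * (U * X) = X" "U * (mat_adjoint U * X) = X"
  using unitary_matD[OF U] X by (simp_all add: assoc_mult_mat[symmetric, of _ n n _ n X n])

lemma unitary_mat_col:
  assumes "unitary_mat n U" and "j < n"
  shows "col U j \<bullet>c col U j = 1"
  using adjoint_mult_self_index[OF unitary_matD(1)[OF assms(1)] assms(2) assms(2)] assms
  by (simp add: unitary_matD(3))

lemma unitary_mat_mult:
  assumes U: "unitary_mat n U" and V: "unitary_mat n V"
  shows "unitary_mat n (U * V)"
  using unitary_matD[OF U] unitary_matD[OF V] unitary_mat_cancel(1)[OF U] unfolding unitary_mat_def
  by (simp add: mat_adjoint_mult assoc_mult_mat[of _ n n _ n _ n])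

lemma unitary_mat_cscalar_prod_self:
  assumes U: "unitary_mat n U" and v: "v \<in> carrier_vec n"
  shows "(mat_adjoint U *\<^sub>v v) \<bullet>c (mat_adjoint U *\<^sub>v v) = v \<bullet>c v"
proof -
  note u = unitary_matD[OF U]
  have "(mat_adjoint U *\<^sub>v v) \<bullet>c (mat_adjoint U *\<^sub>v v) = v \<bullet>c (U *\<^sub>v (mat_adjoint U *\<^sub>v v))"
    using cscalar_prod_mat_adjoint[OF u(2) v mult_mat_vec_carrier[OF u(2) v]] u by simp
  also have "U *\<^sub>v (mat_adjoint U *\<^sub>v v) = v"
    using u v by (simp add: assoc_mult_mat_vec[symmetric, OF u(1) u(2) v])
  finally show ?thesis .
qed

lemma unitary_conj_mult:
  assumes U: "unitary_mat n U" and A: "A \<in> carrier_mat n n" and B: "B \<in> carrier_mat n n"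
  shows "(U * A * mat_adjoint U) * (U * B * mat_adjoint U) = U * (A * B) * mat_adjoint U"
  using unitary_matD[OF U] unitary_mat_cancel[OF U] A B by (simp add: assoc_mult_mat[of _ n n _ n _ n])

lemma unitary_conj_adjoint:
  assumes U: "unitary_mat n U" and A: "A \<in> carrier_mat n n"
  shows "mat_adjoint (U * A * mat_adjoint U) = U * mat_adjoint A * mat_adjoint U"
  using unitary_matD[OF U] A by (simp add: mat_adjoint_mult[of _ n n _ n] assoc_mult_mat[of _ n n _ n _ n])

lemma unitary_conj_cancel:
  assumes U: "unitary_mat n U" and M: "M \<in> carrier_mat n n"
  shows "mat_adjoint U * (U * M * mat_adjoint U) * U = M"
    and "U * (mat_adjoint U * M * U) * mat_adjoint U = M"
  using unitary_matD[OF U] unitary_mat_cancel[OF U] M by (simp_all add: assoc_mult_mat[of _ n n _ n _ n])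

lemma unitary_conj_intertwines:
  assumes U: "unitary_mat n U" and A: "A \<in> carrier_mat n n"
  shows "U * (mat_adjoint U * A * U) = A * U"
proof -
  note u = unitary_matD[OF U]
  have "U * (mat_adjoint U * A * U) = U * (mat_adjoint U * (A * U))"
    by (simp only: assoc_mult_mat[OF u(2) A u(1)])
  also have "\<dots> = A * U" by (rule unitary_mat_cancel(2)[OF U mult_carrier_mat[OF A u(1)]])
  finally show ?thesis .
qed

lemma unitary_diagonalization:
  assumes A: "A \<in> carrier_mat n n" and U: "unitary_mat n U" and D: "D \<in> carrier_mat n n"
    and AU: "A * U = U * D"
  shows "A = U * D * mat_adjoint U" "mat_adjoint U * A * U = D"
proof -
  note u = unitary_matD[OF U]
  have "A = A * (U * mat_adjoint U)" unfolding u(4) using A by simp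
  also have "\<dots> = U * D * mat_adjoint U"
    by (simp only: assoc_mult_mat[symmetric, OF A u(1) u(2)] AU)
  finally show "A = U * D * mat_adjoint U" .
  then show "mat_adjoint U * A * U = D" using unitary_conj_cancel(1)[OF U D] by simp
qed


definition dmat :: "nat \<Rightarrow> (nat \<Rightarrow> real) \<Rightarrow> complex mat" where
  "dmat n d = mat n n (\<lambda>(i,j). if i = j then complex_of_real (d i) else 0)"

lemma dmat_carrier [simp]: "dmat n d \<in> carrier_mat n n"
  and dmat_dim [simp]: "dim_row (dmat n d) = n" "dim_col (dmat n d) = n"
  unfolding dmat_def by simp_all

lemma dmat_index: "i < n \<Longrightarrow> j < n \<Longrightarrow> dmat n d $$ (i,j) = (if i = j then complex_of_real (d i) else 0)"
  unfolding dmat_def by simp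

lemma index_mult_dmat_right:
  assumes M: "M \<in> carrier_mat k n" and "i < k" "j < n"
  shows "(M * dmat n d) $$ (i,j) = M $$ (i,j) * d j"
proof -
  have "(M * dmat n d) $$ (i,j) = (\<Sum>a<n. if a = j then M $$ (i,j) * d j else 0)"
    unfolding index_mult_mat_sum[OF M dmat_carrier assms(2,3)]
    by (rule sum.cong) (use assms in \<open>auto simp: dmat_index\<close>)
  then show ?thesis using assms by simp
qed

lemma index_mult_dmat_left:
  assumes M: "M \<in> carrier_mat n k" and "i < n" "j < k"
  shows "(dmat n d * M) $$ (i,j) = d i * M $$ (i,j)"
proof -
  have "(dmat n d * M) $$ (i,j) = (\<Sum>a<n. if a = i then d i * M $$ (i,j) else 0)"
    unfolding index_mult_mat_sum[OF dmat_carrier M assms(2,3)]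
    by (rule sum.cong) (use assms in \<open>auto simp: dmat_index\<close>)
  then show ?thesis using assms by simp
qed

lemma dmat_mult_dmat: "dmat n a * dmat n b = dmat n (\<lambda>i. a i * b i)"
  by (rule eq_matI) (auto simp: index_mult_dmat_right[OF dmat_carrier] dmat_index simp del: index_mult_mat(1))

lemma mat_adjoint_dmat: "mat_adjoint (dmat n d) = dmat n d"
  by (rule eq_matI) (auto simp: dmat_index)

lemma mult_dmat_vec_index:
  assumes "w \<in> carrier_vec n" "i < n"
  shows "(dmat n d *\<^sub>v w) $ i = d i * w $ i"
proof -
  have "(dmat n d *\<^sub>v w) $ i = (\<Sum>a<n. if a = i then d i * w $ i else 0)"
    unfolding index_mult_mat_vec_sum[OF dmat_carrier assms]
    by (rule sum.cong) (use assms in \<open>auto simp: dmat_index\<close>)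
  then show ?thesis using assms by simp
qed

lemma diagonalization_col_eigen:
  assumes A: "A \<in> carrier_mat n n" and U: "U \<in> carrier_mat n n" and AU: "A * U = U * dmat n d"
    and j: "j < n"
  shows "A *\<^sub>v col U j = complex_of_real (d j) \<cdot>\<^sub>v col U j"
proof (rule eq_vecI)
  fix a assume "a < dim_vec (complex_of_real (d j) \<cdot>\<^sub>v col U j)"
  then have a: "a < n" using U by simp
  have "(A *\<^sub>v col U j) $ a = col (A * U) j $ a"
    by (subst col_mult2[OF A U j]) (rule refl)
  also have "\<dots> = (U * dmat n d) $$ (a,j)"
    unfolding AU by (rule index_col) (use U a j in auto)
  also have "\<dots> = U $$ (a,j) * d j"
    by (rule index_mult_dmat_right[OF U a j])
  finally show "(A *\<^sub>v col U j) $ a = (complex_of_real (d j) \<cdot>\<^sub>v col U j) $ a"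
    using U a j by (auto simp del: index_mult_mat_vec simp: mult.commute)
qed (use A U in auto)


section \<open>Spectral theorem for Hermitian matrices\<close>

lemma unitary_mat_adjoint:
  assumes "unitary_mat n U"
  shows "unitary_mat n (mat_adjoint U)"
  using unitary_matD[OF assms] unfolding unitary_mat_def by simp

definition normalize_vec :: "complex vec \<Rightarrow> complex vec" where
  "normalize_vec v = complex_of_real (1 / sqrt (Re (v \<bullet>c v))) \<cdot>\<^sub>v v"

lemma normalize_vec_carrier [simp]: "v \<in> carrier_vec n \<Longrightarrow> normalize_vec v \<in> carrier_vec n"
  unfolding normalize_vec_def by simp

lemma normalize_vec_unit:
  assumes v: "v \<in> carrier_vec n" and v0: "v \<noteq> 0\<^sub>v n"
  shows "normalize_vec v \<bullet>c normalize_vec v = 1"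
proof -
  define r where "r = Re (v \<bullet>c v)"
  have vv: "v \<bullet>c v = of_real r" unfolding r_def by (rule cscalar_prod_self_real[OF v])
  have "r \<noteq> 0" using cscalar_prod_self_eq_0[OF v] v0 unfolding r_def by auto
  then have "r > 0" using cscalar_prod_self_nonneg[OF v] unfolding r_def by simp
  moreover have "Re (v \<bullet>c v) = r" unfolding r_def ..
  ultimately show ?thesis
    unfolding normalize_vec_def cscalar_prod_smult[OF v v] by (simp add: vv flip: of_real_mult)
qed

lemma normalize_vec_id: "v \<bullet>c v = 1 \<Longrightarrow> normalize_vec v = v"
  unfolding normalize_vec_def by simp

lemma unitary_completion:
  fixes u :: "complex vec"
  assumes u: "u \<in> carrier_vec n" and nu: "u \<bullet>c u = 1"
  shows "\<exists>W. unitary_mat n W \<and> col W 0 = u"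
proof -
  interpret cof_vec_space n "TYPE(complex)" .
  have u0: "u \<noteq> 0\<^sub>v n" using nu u by auto
  have n: "0 < n"
    using u nu by (cases n) (auto simp: cscalar_prod_sum)
  define b where "b = basis_completion u"
  from basis_completion[OF u u0, folded b_def]
  have b: "set b \<subseteq> carrier_vec n" "distinct b" "\<not> lin_dep (set b)" "length b = n" "hd b = u"
    by auto
  from b(4,5) n obtain vs where bv: "b = u # vs" by (cases b) auto
  define ws where "ws = gram_schmidt n b"
  from gram_schmidt_result[OF b(1-3) ws_def]
  have ws: "corthogonal ws" "set ws \<subseteq> carrier_vec n" "length ws = n" using b(4) by auto
  have hd: "hd ws = u" using gram_schmidt_hd[OF u, of vs] bv ws_def by simp
  define W where "W = mat_of_cols n (map normalize_vec ws)"
  have W: "W \<in> carrier_mat n n" unfolding W_def using ws by auto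
  have colW: "col W i = normalize_vec (ws ! i)" if "i < n" for i
  proof -
    have "ws ! i \<in> carrier_vec n" using ws(2,3) that nth_mem by blast
    then show ?thesis unfolding W_def using ws(3) that by (subst col_mat_of_cols) auto
  qed
  have "mat_adjoint W * W = 1\<^sub>m n"
  proof (rule eq_matI)
    fix i j assume "i < dim_row (1\<^sub>m n :: complex mat)" "j < dim_col (1\<^sub>m n :: complex mat)"
    then have i: "i < n" and j: "j < n" by auto
    have wi: "ws ! i \<in> carrier_vec n" and wj: "ws ! j \<in> carrier_vec n" using ws i j by auto
    have "(mat_adjoint W * W) $$ (i,j) = normalize_vec (ws ! j) \<bullet>c normalize_vec (ws ! i)"
      using adjoint_mult_self_index[OF W i j] colW[OF i] colW[OF j] by simp
    also have "\<dots> = 1\<^sub>m n $$ (i,j)"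
    proof (cases "i = j")
      case True
      have "ws ! i \<bullet>c ws ! i \<noteq> 0" using ws(1,3) i unfolding corthogonal_def by auto
      then have "ws ! i \<noteq> 0\<^sub>v n" using wi by auto
      then show ?thesis using True i normalize_vec_unit[OF wi] by simp
    next
      case False
      then have "ws ! j \<bullet>c ws ! i = 0" using ws(1,3) i j unfolding corthogonal_def by auto
      then show ?thesis
        using False i j unfolding normalize_vec_def cscalar_prod_smult[OF wj wi] by simp
    qed
    finally show "(mat_adjoint W * W) $$ (i,j) = 1\<^sub>m n $$ (i,j)" .
  qed (use W in auto)
  moreover have "col W 0 = u"
    using colW[OF n] hd ws(3) n normalize_vec_id[OF nu] by (cases ws) auto
  ultimately show ?thesis using W unfolding unitary_mat_def by blast
qed

lemma exists_unit_eigenvector: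
  fixes A :: "complex mat"
  assumes A: "A \<in> carrier_mat n n" and n: "0 < n"
  shows "\<exists>u e. u \<in> carrier_vec n \<and> u \<bullet>c u = 1 \<and> A *\<^sub>v u = e \<cdot>\<^sub>v u"
proof -
  obtain as where cp: "char_poly A = (\<Prod>a\<leftarrow>as. [:- a, 1:])" and len: "length as = n"
    using char_poly_factorized[OF A] by blast
  from len n obtain e as' where as: "as = e # as'" by (cases as) auto
  have "poly (char_poly A) e = 0" unfolding cp as by simp
  then have "eigenvalue A e" using eigenvalue_root_char_poly[OF A] by simp
  then have "eigenvector A (find_eigenvector A e) e" by (rule find_eigenvector[OF A])
  then obtain v where v: "v \<in> carrier_vec n" "v \<noteq> 0\<^sub>v n" and Av: "A *\<^sub>v v = e \<cdot>\<^sub>v v"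
    unfolding eigenvector_def using A by auto
  have "A *\<^sub>v normalize_vec v = e \<cdot>\<^sub>v normalize_vec v"
    unfolding normalize_vec_def mult_mat_vec[OF A v(1)] Av by (auto simp: smult_smult_assoc mult.commute)
  then show ?thesis using normalize_vec_unit[OF v] v(1) by (intro exI conjI) auto
qed

lemma hermitian_eigenvalue_real:
  assumes A: "hermitian_mat n A" and u: "u \<in> carrier_vec n" "u \<bullet>c u = 1" and Au: "A *\<^sub>v u = e \<cdot>\<^sub>v u"
  shows "e = of_real (Re e)"
proof -
  have Ac: "A \<in> carrier_mat n n" and Aa: "mat_adjoint A = A"
    using A unfolding hermitian_mat_def by auto
  have "e = (A *\<^sub>v u) \<bullet>c u" using u cscalar_prod_smult[OF u(1) u(1), of e 1] by (simp add: Au)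
  also have "\<dots> = u \<bullet>c (A *\<^sub>v u)" using cscalar_prod_mat_adjoint[OF Ac u(1) u(1)] Aa by simp
  also have "\<dots> = cnj e" using u cscalar_prod_smult[OF u(1) u(1), of 1 e] by (simp add: Au)
  finally show ?thesis by (metis Reals_cnj_iff complex_is_Real_iff of_real_Re)
qed

lemma hermitian_unitary_conj:
  assumes A: "hermitian_mat n A" and W: "unitary_mat n W"
  shows "hermitian_mat n (mat_adjoint W * A * W)"
proof -
  note w = unitary_matD[OF W]
  have Ac: "A \<in> carrier_mat n n" and Aa: "mat_adjoint A = A" using A unfolding hermitian_mat_def by auto
  have "mat_adjoint W * A * W \<in> carrier_mat n n" using w Ac by (meson mult_carrier_mat)
  moreover have "mat_adjoint (mat_adjoint W * A * W) = mat_adjoint W * A * W"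
    using unitary_conj_adjoint[OF unitary_mat_adjoint[OF W] Ac] Aa by simp
  ultimately show ?thesis unfolding hermitian_mat_def ..
qed

lemma unitary_conj_first_col:
  assumes A: "A \<in> carrier_mat n n" and W: "unitary_mat n W" and n: "0 < n"
    and Wu: "col W 0 = u" and Au: "A *\<^sub>v u = e \<cdot>\<^sub>v u" and i: "i < n"
  shows "(mat_adjoint W * A * W) $$ (i,0) = (if i = 0 then e else 0)"
proof -
  note w = unitary_matD[OF W]
  have "(mat_adjoint W * A * W) $$ (i,0) = row (mat_adjoint W) i \<bullet> col (A * W) 0"
    using i n w A by (simp add: assoc_mult_mat[OF w(2) A w(1)] del: assoc_mult_mat)
  also have "col (A * W) 0 = e \<cdot>\<^sub>v col W 0" using col_mult2[OF A w(1) n] Wu Au by simp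
  also have "row (mat_adjoint W) i \<bullet> (e \<cdot>\<^sub>v col W 0) = e * (row (mat_adjoint W) i \<bullet> col W 0)"
    using w i n by simp
  also have "row (mat_adjoint W) i \<bullet> col W 0 = (mat_adjoint W * W) $$ (i,0)"
    using w(1) i n by simp
  finally show ?thesis unfolding w(3) using i n by simp
qed

definition block_diag_one :: "nat \<Rightarrow> complex mat \<Rightarrow> complex mat" where
  "block_diag_one n V = mat n n (\<lambda>(i,j). if i = 0 \<or> j = 0 then (if i = j then 1 else 0) else V $$ (i - 1, j - 1))"

lemma block_diag_one_carrier [simp]: "block_diag_one n V \<in> carrier_mat n n"
  and block_diag_one_dim [simp]: "dim_row (block_diag_one n V) = n" "dim_col (block_diag_one n V) = n"
  unfolding block_diag_one_def by simp_all

lemma block_diag_one_index: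
  "i < n \<Longrightarrow> j < n \<Longrightarrow> block_diag_one n V $$ (i,j) =
     (if i = 0 \<or> j = 0 then (if i = j then 1 else 0) else V $$ (i - 1, j - 1))"
  unfolding block_diag_one_def by simp


lemma unitary_block_diag_one:
  assumes V: "unitary_mat m V"
  shows "unitary_mat (Suc m) (block_diag_one (Suc m) V)"
proof -
  let ?n = "Suc m" and ?B = "block_diag_one (Suc m) V"
  have Vc: "V \<in> carrier_mat m m" and VV: "mat_adjoint V * V = 1\<^sub>m m" using V unfolding unitary_mat_def by auto
  have "mat_adjoint ?B * ?B = 1\<^sub>m ?n"
  proof (rule eq_matI)
    fix i j assume "i < dim_row (1\<^sub>m ?n :: complex mat)" "j < dim_col (1\<^sub>m ?n :: complex mat)"
    then have i: "i < ?n" and j: "j < ?n" by auto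
    have "(mat_adjoint ?B * ?B) $$ (i,j) = (\<Sum>a<?n. cnj (?B $$ (a,i)) * ?B $$ (a,j))"
      unfolding index_mult_mat_sum[OF mat_adjoint_carrier[OF block_diag_one_carrier] block_diag_one_carrier i j]
      by (rule sum.cong) (use i in auto)
    also have "\<dots> = cnj (?B $$ (0,i)) * ?B $$ (0,j) + (\<Sum>a<m. cnj (?B $$ (Suc a,i)) * ?B $$ (Suc a,j))"
      by (rule sum.lessThan_Suc_shift)
    also have "\<dots> = 1\<^sub>m ?n $$ (i,j)"
    proof (cases "i = 0 \<or> j = 0")
      case True
      then show ?thesis using i j by (auto simp: block_diag_one_index)
    next
      case False
      then obtain i' j' where ij: "i = Suc i'" "j = Suc j'" by (cases i; cases j) auto
      have "(\<Sum>a<m. cnj (?B $$ (Suc a,i)) * ?B $$ (Suc a,j)) = (mat_adjoint V * V) $$ (i',j')"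
        by (subst index_mult_mat_sum[OF mat_adjoint_carrier[OF Vc] Vc])
          (use i j ij Vc in \<open>auto simp: block_diag_one_index intro!: sum.cong\<close>)
      then show ?thesis unfolding VV using i j ij by (simp add: block_diag_one_index)
    qed
    finally show "(mat_adjoint ?B * ?B) $$ (i,j) = 1\<^sub>m ?n $$ (i,j)" .
  qed auto
  then show ?thesis unfolding unitary_mat_def by simp
qed

lemma block_diag_one_diagonalizes:
  assumes A: "A \<in> carrier_mat (Suc m) (Suc m)" and V: "V \<in> carrier_mat m m"
    and col0: "\<And>i. i < Suc m \<Longrightarrow> A $$ (i,0) = (if i = 0 then of_real c else 0)"
    and row0: "\<And>j. j < Suc m \<Longrightarrow> A $$ (0,j) = (if j = 0 then of_real c else 0)"
    and BV: "mat m m (\<lambda>(i,j). A $$ (Suc i, Suc j)) * V = V * dmat m d"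
  shows "A * block_diag_one (Suc m) V = block_diag_one (Suc m) V * dmat (Suc m) (\<lambda>i. if i = 0 then c else d (i - 1))"
    (is "A * ?B = ?B * dmat _ ?d")
proof (rule eq_matI)
  fix i j assume "i < dim_row (?B * dmat (Suc m) ?d)" "j < dim_col (?B * dmat (Suc m) ?d)"
  then have i: "i < Suc m" and j: "j < Suc m" by auto
  have "(A * ?B) $$ (i,j) = A $$ (i,0) * ?B $$ (0,j) + (\<Sum>a<m. A $$ (i,Suc a) * ?B $$ (Suc a,j))"
    unfolding index_mult_mat_sum[OF A block_diag_one_carrier i j] by (rule sum.lessThan_Suc_shift)
  also have "\<dots> = ?B $$ (i,j) * ?d j"
  proof (cases "i = 0 \<or> j = 0")
    case True
    have "(\<Sum>a<m. A $$ (i,Suc a) * ?B $$ (Suc a,j)) = 0"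
      using True i j by (intro sum.neutral) (auto simp: block_diag_one_index row0)
    then show ?thesis using True i j by (auto simp: block_diag_one_index col0)
  next
    case False
    then obtain i' j' where ij: "i = Suc i'" "j = Suc j'" by (cases i; cases j) auto
    have "(\<Sum>a<m. A $$ (i,Suc a) * ?B $$ (Suc a,j)) = (mat m m (\<lambda>(i,j). A $$ (Suc i, Suc j)) * V) $$ (i',j')"
      by (subst index_mult_mat_sum[OF _ V, of _ m])
        (use i j ij in \<open>auto simp: block_diag_one_index intro!: sum.cong\<close>)
    also have "\<dots> = V $$ (i',j') * d j'"
      unfolding BV by (rule index_mult_dmat_right[OF V]) (use i j ij in auto)
    finally show ?thesis using False i j ij by (simp add: block_diag_one_index)
  qed
  also have "\<dots> = (?B * dmat (Suc m) ?d) $$ (i,j)"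
    by (rule index_mult_dmat_right[symmetric, OF block_diag_one_carrier i j])
  finally show "(A * ?B) $$ (i,j) = (?B * dmat (Suc m) ?d) $$ (i,j)" .
qed (use A in auto)


lemma col_mult_block_diag_one_0:
  assumes W: "W \<in> carrier_mat n n" and n: "0 < n"
  shows "col (W * block_diag_one n V) 0 = col W 0"
proof -
  have "col (block_diag_one n V) 0 = col (1\<^sub>m n) 0"
    by (rule eq_vecI) (use n in \<open>auto simp: block_diag_one_index\<close>)
  then show ?thesis
    using col_mult2[OF W block_diag_one_carrier n] col_mult2[OF W one_carrier_mat n] W by simp
qed

lemma hermitian_lower_block:
  assumes "hermitian_mat (Suc m) A"
  shows "hermitian_mat m (mat m m (\<lambda>(i,j). A $$ (Suc i, Suc j)))"
  unfolding hermitian_mat_def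
proof (intro conjI eq_matI)
  fix i j assume "i < dim_row (mat m m (\<lambda>(i,j). A $$ (Suc i, Suc j)))"
    "j < dim_col (mat m m (\<lambda>(i,j). A $$ (Suc i, Suc j)))"
  then show "mat_adjoint (mat m m (\<lambda>(i,j). A $$ (Suc i, Suc j))) $$ (i,j)
      = mat m m (\<lambda>(i,j). A $$ (Suc i, Suc j)) $$ (i,j)"
    using hermitian_mat_index[OF assms, of "Suc i" "Suc j"] by simp
qed auto

lemma hermitian_diagonalization_step:
  fixes A :: "complex mat"
  assumes A: "hermitian_mat (Suc m) A" and u: "u \<in> carrier_vec (Suc m)" "u \<bullet>c u = 1"
    and Au: "A *\<^sub>v u = e \<cdot>\<^sub>v u"
    and IH: "\<And>B. hermitian_mat m B \<Longrightarrow> \<exists>V d. unitary_mat m V \<and> B * V = V * dmat m d"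
  shows "\<exists>U d. unitary_mat (Suc m) U \<and> A * U = U * dmat (Suc m) d \<and> col U 0 = u"
proof -
  \<comment> \<open>In a unitary basis starting with \<open>u\<close>, \<open>A\<close> is the direct sum of the \<open>1 \<times> 1\<close> block \<open>e\<close>
     and a Hermitian \<open>m \<times> m\<close> block, which the induction hypothesis diagonalises.\<close>
  let ?n = "Suc m"
  have Ac: "A \<in> carrier_mat ?n ?n" using A unfolding hermitian_mat_def by simp
  obtain W where W: "unitary_mat ?n W" and Wu: "col W 0 = u" using unitary_completion[OF u] by blast
  note w = unitary_matD[OF W]
  define A' where "A' = mat_adjoint W * A * W"
  have A': "hermitian_mat ?n A'" unfolding A'_def by (rule hermitian_unitary_conj[OF A W])
  then have A'c: "A' \<in> carrier_mat ?n ?n" unfolding hermitian_mat_def by simp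
  have col0: "A' $$ (i,0) = (if i = 0 then of_real (Re e) else 0)" if "i < ?n" for i
    using unitary_conj_first_col[OF Ac W _ Wu Au that] hermitian_eigenvalue_real[OF A u Au]
    unfolding A'_def by simp
  have row0: "A' $$ (0,j) = (if j = 0 then of_real (Re e) else 0)" if "j < ?n" for j
    using hermitian_mat_index[OF A' _ that, of 0] col0[OF that] by auto
  obtain V d where V: "unitary_mat m V"
    and BV: "mat m m (\<lambda>(i,j). A' $$ (Suc i, Suc j)) * V = V * dmat m d"
    using IH[OF hermitian_lower_block[OF A']] by blast
  define B where "B = block_diag_one ?n V"
  define d' where "d' i = (if i = 0 then Re e else d (i - 1))" for i
  have A'B: "A' * B = B * dmat ?n d'"
    unfolding B_def d'_def
    by (rule block_diag_one_diagonalizes[OF A'c unitary_matD(1)[OF V] col0 row0 BV])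
  have Bc: "B \<in> carrier_mat ?n ?n" unfolding B_def by simp
  have AW: "W * A' = A * W" unfolding A'_def by (rule unitary_conj_intertwines[OF W Ac])
  have "A * (W * B) = (A * W) * B" by (rule assoc_mult_mat[symmetric, OF Ac w(1) Bc])
  also have "\<dots> = W * (A' * B)" unfolding AW[symmetric] by (rule assoc_mult_mat[OF w(1) A'c Bc])
  also have "\<dots> = W * B * dmat ?n d'" unfolding A'B by (rule assoc_mult_mat[symmetric, OF w(1) Bc dmat_carrier])
  finally have "A * (W * B) = W * B * dmat ?n d'" .
  moreover have "unitary_mat ?n (W * B)"
    unfolding B_def by (rule unitary_mat_mult[OF W unitary_block_diag_one[OF V]])
  moreover have "col (W * B) 0 = u"
    unfolding B_def col_mult_block_diag_one_0[OF w(1) zero_less_Suc] by (rule Wu)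
  ultimately show ?thesis by blast
qed

theorem hermitian_diagonalizable:
  fixes A :: "complex mat"
  assumes "hermitian_mat n A"
  shows "\<exists>U d. unitary_mat n U \<and> A * U = U * dmat n d"
  using assms
proof (induction n arbitrary: A)
  case 0
  then have "A \<in> carrier_mat 0 0" unfolding hermitian_mat_def by simp
  then have "A * 1\<^sub>m 0 = 1\<^sub>m 0 * dmat 0 (\<lambda>_. 0)" by (intro eq_matI) auto
  then show ?case by (intro exI[of _ "1\<^sub>m 0"] exI[of _ "\<lambda>_. 0"]) (simp add: unitary_mat_def)
next
  case (Suc m)
  then have "A \<in> carrier_mat (Suc m) (Suc m)" unfolding hermitian_mat_def by simp
  then obtain u e where "u \<in> carrier_vec (Suc m)" "u \<bullet>c u = 1" "A *\<^sub>v u = e \<cdot>\<^sub>v u"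
    using exists_unit_eigenvector by blast
  from hermitian_diagonalization_step[OF Suc.prems this Suc.IH] show ?case by blast
qed

lemma hermitian_diagonalizable_eigenvector:
  fixes A :: "complex mat"
  assumes "hermitian_mat n A" and "u \<in> carrier_vec n" "u \<bullet>c u = 1" and "A *\<^sub>v u = e \<cdot>\<^sub>v u"
  shows "\<exists>U d. unitary_mat n U \<and> A * U = U * dmat n d \<and> col U 0 = u"
proof (cases n)
  case 0
  then show ?thesis using assms(2,3) by (simp add: cscalar_prod_sum)
next
  case (Suc m)
  then show ?thesis
    using hermitian_diagonalization_step[of m A u e] hermitian_diagonalizable[of m] assms by blast
qed


lemma mtrace_carrier: "A \<in> carrier_mat n n \<Longrightarrow> mtrace A = (\<Sum>i<n. A $$ (i,i))"
  unfolding mtrace_def by simp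

lemma mtrace_mult_commute:
  assumes A: "A \<in> carrier_mat n m" and B: "B \<in> carrier_mat m n"
  shows "mtrace (A * B) = mtrace (B * A)"
proof -
  have "mtrace (A * B) = (\<Sum>i<n. \<Sum>a<m. A $$ (i,a) * B $$ (a,i))"
    using A B by (simp add: mtrace_carrier[of _ n] index_mult_mat_sum[OF A B] del: index_mult_mat)
  also have "\<dots> = (\<Sum>a<m. \<Sum>i<n. B $$ (a,i) * A $$ (i,a))"
    by (subst sum.swap) (simp add: mult.commute)
  also have "\<dots> = mtrace (B * A)"
    using A B by (simp add: mtrace_carrier[of _ m] index_mult_mat_sum[OF B A] del: index_mult_mat)
  finally show ?thesis .
qed

lemma mtrace_minus:
  assumes "A \<in> carrier_mat n n" "B \<in> carrier_mat n n"
  shows "mtrace (A - B) = mtrace A - mtrace B"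
proof -
  have "A - B \<in> carrier_mat n n" by (rule minus_carrier_mat[OF assms(2)])
  then show ?thesis using assms by (simp add: mtrace_carrier[of _ n] sum_subtractf)
qed

lemma mtrace_dmat: "mtrace (dmat n d) = of_real (\<Sum>i<n. d i)"
  unfolding mtrace_def by (simp add: dmat_index)

lemma mtrace_unitary_conj:
  assumes U: "unitary_mat n U" and M: "M \<in> carrier_mat n n"
  shows "mtrace (U * M * mat_adjoint U) = mtrace M"
proof -
  note u = unitary_matD[OF U]
  have "mtrace (U * M * mat_adjoint U) = mtrace (mat_adjoint U * (U * M))"
    by (rule mtrace_mult_commute) (use u M in auto)
  also have "mat_adjoint U * (U * M) = M" by (rule unitary_mat_cancel(1)[OF U M])
  finally show ?thesis .
qed

lemma mtrace_diagonalization: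
  assumes "X \<in> carrier_mat n n" "unitary_mat n U" "X * U = U * dmat n d"
  shows "mtrace X = of_real (\<Sum>i<n. d i)"
  using unitary_diagonalization(1)[OF assms(1,2) dmat_carrier assms(3)]
    mtrace_unitary_conj[OF assms(2) dmat_carrier] by (simp add: mtrace_dmat)

lemma unitary_conj_diag_index:
  fixes U M :: "complex mat"
  assumes U: "U \<in> carrier_mat n n" and M: "M \<in> carrier_mat n n" and k: "k < n"
  shows "(mat_adjoint U * M * U) $$ (k,k) = (M *\<^sub>v col U k) \<bullet>c col U k"
proof -
  have "(mat_adjoint U * M * U) $$ (k,k) = (\<Sum>a<n. mat_adjoint U $$ (k,a) * (M * U) $$ (a,k))"
    unfolding assoc_mult_mat[OF mat_adjoint_carrier[OF U] M U]
    by (rule index_mult_mat_sum) (use U M k in auto)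
  also have "\<dots> = (\<Sum>a<n. (M *\<^sub>v col U k) $ a * cnj (col U k $ a))"
  proof (rule sum.cong[OF refl])
    fix a assume "a \<in> {..<n}"
    then have "(M * U) $$ (a,k) = (M *\<^sub>v col U k) $ a"
      using col_mult2[OF M U k] index_col[of a "M * U" k] k M U by simp
    then show "mat_adjoint U $$ (k,a) * (M * U) $$ (a,k) = (M *\<^sub>v col U k) $ a * cnj (col U k $ a)"
      using \<open>a \<in> {..<n}\<close> k U by (simp add: mult.commute)
  qed
  also have "\<dots> = (M *\<^sub>v col U k) \<bullet>c col U k"
    by (rule cscalar_prod_sum[symmetric]) (use M U in auto)
  finally show ?thesis .
qed

lemma unitary_quadratic_form:
  assumes U: "unitary_mat n U" and M: "M \<in> carrier_mat n n" and v: "v \<in> carrier_vec n"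
  shows "(M *\<^sub>v v) \<bullet>c v = ((mat_adjoint U * M * U) *\<^sub>v (mat_adjoint U *\<^sub>v v)) \<bullet>c (mat_adjoint U *\<^sub>v v)"
proof -
  note u = unitary_matD[OF U]
  define w where "w = mat_adjoint U *\<^sub>v v"
  have w: "w \<in> carrier_vec n" unfolding w_def by (rule mult_mat_vec_carrier[OF u(2) v])
  have vw: "v = U *\<^sub>v w"
    unfolding w_def using u v by (simp add: assoc_mult_mat_vec[symmetric, OF u(1) u(2) v])
  have "(M *\<^sub>v v) \<bullet>c v = cnj ((U *\<^sub>v w) \<bullet>c ((M * U) *\<^sub>v w))"
    unfolding vw using M u w by (subst cscalar_prod_cnj_commute[of _ n]) auto
  also have "\<dots> = cnj (w \<bullet>c (mat_adjoint U *\<^sub>v ((M * U) *\<^sub>v w)))"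
    using cscalar_prod_mat_adjoint[OF u(1) w, of "(M * U) *\<^sub>v w"] M u w by simp
  also have "\<dots> = (mat_adjoint U *\<^sub>v ((M * U) *\<^sub>v w)) \<bullet>c w"
    using cscalar_prod_cnj_commute[of "mat_adjoint U *\<^sub>v ((M * U) *\<^sub>v w)" n w] M u w by simp
  also have "mat_adjoint U *\<^sub>v ((M * U) *\<^sub>v w) = (mat_adjoint U * M * U) *\<^sub>v w"
    unfolding assoc_mult_mat[OF u(2) M u(1)]
    by (rule assoc_mult_mat_vec[symmetric, OF u(2) mult_carrier_mat[OF M u(1)] w])
  finally show ?thesis unfolding w_def .
qed

lemma dmat_quadratic_form:
  assumes w: "w \<in> carrier_vec n"
  shows "(dmat n d *\<^sub>v w) \<bullet>c w = of_real (\<Sum>i<n. d i * (cmod (w $ i))^2)"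
proof -
  have "(dmat n d *\<^sub>v w) \<bullet>c w = (\<Sum>i<n. (dmat n d *\<^sub>v w) $ i * cnj (w $ i))"
    by (rule cscalar_prod_sum[OF mult_mat_vec_carrier[OF dmat_carrier w] w])
  also have "\<dots> = (\<Sum>i<n. of_real (d i) * (w $ i * cnj (w $ i)))"
    by (rule sum.cong[OF refl]) (simp add: mult_dmat_vec_index[OF w] mult.assoc del: index_mult_mat_vec)
  also have "\<dots> = of_real (\<Sum>i<n. d i * (cmod (w $ i))^2)"
    unfolding of_real_sum by (rule sum.cong[OF refl]) (simp only: complex_norm_square[symmetric] of_real_mult)
  finally show ?thesis .
qed

lemma diagonalized_quadratic_form:
  assumes A: "A \<in> carrier_mat n n" and U: "unitary_mat n U" and AU: "A * U = U * dmat n d"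
    and v: "v \<in> carrier_vec n"
  obtains c where "\<And>i. 0 \<le> c i" "(\<Sum>i<n. c i) = Re (v \<bullet>c v)"
    "(A *\<^sub>v v) \<bullet>c v = of_real (\<Sum>i<n. d i * c i)"
proof
  define w where "w = mat_adjoint U *\<^sub>v v"
  have w: "w \<in> carrier_vec n" unfolding w_def by (rule mult_mat_vec_carrier[OF unitary_matD(2)[OF U] v])
  show "0 \<le> (cmod (w $ i))^2" for i by simp
  show "(\<Sum>i<n. (cmod (w $ i))^2) = Re (v \<bullet>c v)"
    using cscalar_prod_self[OF w] unitary_mat_cscalar_prod_self[OF U v] unfolding w_def by simp
  have "(A *\<^sub>v v) \<bullet>c v = (dmat n d *\<^sub>v w) \<bullet>c w"
    unfolding unitary_quadratic_form[OF U A v] unitary_diagonalization(2)[OF A U dmat_carrier AU] w_def ..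
  then show "(A *\<^sub>v v) \<bullet>c v = of_real (\<Sum>i<n. d i * (cmod (w $ i))^2)"
    using dmat_quadratic_form[OF w] by simp
qed


section \<open>Trace norm and pseudo-inverse of a Hermitian matrix\<close>

lemma psd_mat_eigen_of_square:
  assumes C: "psd_mat n C" and u: "u \<in> carrier_vec n" and s: "s \<ge> 0"
    and CCu: "(C * C) *\<^sub>v u = complex_of_real (s^2) \<cdot>\<^sub>v u"
  shows "C *\<^sub>v u = complex_of_real s \<cdot>\<^sub>v u"
proof -
  have Cc: "C \<in> carrier_mat n n" and Ca: "mat_adjoint C = C"
    and pos: "\<And>v. v \<in> carrier_vec n \<Longrightarrow> 0 \<le> Re ((C *\<^sub>v v) \<bullet>c v)"
    using C unfolding psd_mat_def hermitian_mat_def by auto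
  have Cu: "C *\<^sub>v u \<in> carrier_vec n" by (rule mult_mat_vec_carrier[OF Cc u])
  have CCu': "C *\<^sub>v (C *\<^sub>v u) = complex_of_real (s^2) \<cdot>\<^sub>v u"
    using CCu assoc_mult_mat_vec[OF Cc Cc u] by simp
  show ?thesis
  proof (cases "s = 0")
    case True
    have "(C *\<^sub>v u) \<bullet>c (C *\<^sub>v u) = u \<bullet>c (C *\<^sub>v (C *\<^sub>v u))"
      using cscalar_prod_mat_adjoint[OF Cc u Cu] Ca by simp
    also have "\<dots> = 0" unfolding CCu' True using u by (simp add: cscalar_prod_sum)
    finally have "C *\<^sub>v u = 0\<^sub>v n" using cscalar_prod_self_eq_0[OF Cu] by simp
    then show ?thesis using True u by auto
  next
    case False
    then have sp: "s > 0" using s by simp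
    define y where "y = C *\<^sub>v u - complex_of_real s \<cdot>\<^sub>v u"
    have y: "y \<in> carrier_vec n" unfolding y_def using Cu u by simp
    \<comment> \<open>\<open>y\<close> is an eigenvector of the positive matrix \<open>C\<close> for the eigenvalue \<open>-s < 0\<close>, so it vanishes.\<close>
    have "C *\<^sub>v y = C *\<^sub>v (C *\<^sub>v u) - C *\<^sub>v (complex_of_real s \<cdot>\<^sub>v u)"
      unfolding y_def by (rule mult_minus_distrib_mat_vec[OF Cc Cu]) (use u in simp)
    also have "\<dots> = (- complex_of_real s) \<cdot>\<^sub>v y"
      unfolding CCu' mult_mat_vec[OF Cc u] y_def
      by (rule eq_vecI) (use u Cu Cc in \<open>auto simp: algebra_simps power2_eq_square\<close>)
    finally have "(C *\<^sub>v y) \<bullet>c y = (- complex_of_real s) * (y \<bullet>c y)"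
      using cscalar_prod_smult[OF y y, of "- complex_of_real s" 1] by simp
    then have "s * Re (y \<bullet>c y) \<le> 0" using pos[OF y] by simp
    then have "Re (y \<bullet>c y) = 0"
      using sp cscalar_prod_self_nonneg[OF y] by (simp add: mult_le_0_iff)
    then have y0: "y = 0\<^sub>v n" by (rule cscalar_prod_self_eq_0[OF y])
    show ?thesis
    proof (rule eq_vecI)
      fix a assume "a < dim_vec (complex_of_real s \<cdot>\<^sub>v u)"
      then have a: "a < n" using u by simp
      have "y $ a = 0" using y0 a by simp
      then show "(C *\<^sub>v u) $ a = (complex_of_real s \<cdot>\<^sub>v u) $ a" using a u Cu unfolding y_def by simp
    qed (use Cu u Cc in auto)
  qed
qed

lemma unitary_conj_mult_right:
  assumes U: "unitary_mat n U" and D: "D \<in> carrier_mat n n"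
  shows "U * D * mat_adjoint U * U = U * D"
  using unitary_matD[OF U] D by (simp add: assoc_mult_mat[of _ n n _ n _ n])

lemma psd_mat_unitary_conj_dmat:
  assumes U: "unitary_mat n U" and d: "\<And>i. 0 \<le> d i"
  shows "psd_mat n (U * dmat n d * mat_adjoint U)"
proof -
  let ?B = "U * dmat n d * mat_adjoint U"
  note u = unitary_matD[OF U]
  have B: "?B \<in> carrier_mat n n" using u by (meson dmat_carrier mult_carrier_mat)
  have "mat_adjoint ?B = ?B"
    using unitary_conj_adjoint[OF U dmat_carrier] by (simp add: mat_adjoint_dmat)
  moreover have "0 \<le> Re ((?B *\<^sub>v v) \<bullet>c v)" if v: "v \<in> carrier_vec n" for v
  proof -
    obtain c where "\<And>i. 0 \<le> c i" "(?B *\<^sub>v v) \<bullet>c v = of_real (\<Sum>i<n. d i * c i)"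
      using diagonalized_quadratic_form[OF B U unitary_conj_mult_right[OF U dmat_carrier] v] by blast
    then show ?thesis using d by (simp add: sum_nonneg)
  qed
  ultimately show ?thesis using B unfolding psd_mat_def hermitian_mat_def by blast
qed

lemma psd_sqrt_unique:
  assumes C: "psd_mat n C" and X: "hermitian_mat n X" and CC: "C * C = X * X"
    and U: "unitary_mat n U" and XU: "X * U = U * dmat n d"
  shows "C = U * dmat n (\<lambda>i. \<bar>d i\<bar>) * mat_adjoint U"
proof -
  let ?B = "U * dmat n (\<lambda>i. \<bar>d i\<bar>) * mat_adjoint U"
  note u = unitary_matD[OF U]
  have Cc: "C \<in> carrier_mat n n" using C unfolding psd_mat_def hermitian_mat_def by simp
  have Xc: "X \<in> carrier_mat n n" using X unfolding hermitian_mat_def by simp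
  have B: "?B \<in> carrier_mat n n" using u by (meson dmat_carrier mult_carrier_mat)
  have BU: "?B * U = U * dmat n (\<lambda>i. \<bar>d i\<bar>)" by (rule unitary_conj_mult_right[OF U dmat_carrier])
  have colC: "C *\<^sub>v col U j = ?B *\<^sub>v col U j" if j: "j < n" for j
  proof -
    have cj: "col U j \<in> carrier_vec n" using u(1) j by simp
    have "(C * C) *\<^sub>v col U j = X *\<^sub>v (X *\<^sub>v col U j)" unfolding CC by (rule assoc_mult_mat_vec[OF Xc Xc cj])
    also have "\<dots> = complex_of_real (\<bar>d j\<bar>^2) \<cdot>\<^sub>v col U j"
      unfolding diagonalization_col_eigen[OF Xc u(1) XU j] mult_mat_vec[OF Xc cj]
      by (simp add: smult_smult_assoc power2_eq_square)
    finally have "C *\<^sub>v col U j = complex_of_real \<bar>d j\<bar> \<cdot>\<^sub>v col U j"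
      by (intro psd_mat_eigen_of_square[OF C cj]) auto
    then show ?thesis using diagonalization_col_eigen[OF B u(1) BU j] by simp
  qed
  have "C * U = ?B * U"
  proof (rule eq_matI)
    fix a j assume "a < dim_row (?B * U)" "j < dim_col (?B * U)"
    then have a: "a < n" and j: "j < n" using B u(1) by auto
    have "(C * U) $$ (a,j) = (C *\<^sub>v col U j) $ a" using a j Cc u(1) by simp
    also have "\<dots> = (?B * U) $$ (a,j)" unfolding colC[OF j] using a j B u(1) by simp
    finally show "(C * U) $$ (a,j) = (?B * U) $$ (a,j)" .
  qed (use Cc B u(1) in auto)
  then have "C * U = U * dmat n (\<lambda>i. \<bar>d i\<bar>)" unfolding BU .
  then show ?thesis by (rule unitary_diagonalization(1)[OF Cc U dmat_carrier])
qed

lemma abs_mat_hermitian: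
  assumes X: "hermitian_mat n X" and U: "unitary_mat n U" and XU: "X * U = U * dmat n d"
  shows "abs_mat X = U * dmat n (\<lambda>i. \<bar>d i\<bar>) * mat_adjoint U"
proof -
  let ?B = "U * dmat n (\<lambda>i. \<bar>d i\<bar>) * mat_adjoint U"
  have Xc: "X \<in> carrier_mat n n" and Xa: "mat_adjoint X = X" using X unfolding hermitian_mat_def by auto
  have "?B * ?B = U * dmat n (\<lambda>i. d i * d i) * mat_adjoint U"
    using unitary_conj_mult[OF U dmat_carrier dmat_carrier] by (simp add: dmat_mult_dmat abs_mult_self)
  also have "\<dots> = mat_adjoint X * X"
    using unitary_conj_mult[OF U dmat_carrier dmat_carrier, of d d]
      unitary_diagonalization(1)[OF Xc U dmat_carrier XU] Xa by (simp add: dmat_mult_dmat)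
  finally have BB: "?B * ?B = mat_adjoint X * X" .
  show ?thesis unfolding abs_mat_def
  proof (rule the_equality)
    show "psd_mat (dim_col X) ?B \<and> ?B * ?B = mat_adjoint X * X"
      using psd_mat_unitary_conj_dmat[OF U] BB Xc by simp
  next
    fix C assume "psd_mat (dim_col X) C \<and> C * C = mat_adjoint X * X"
    then show "C = ?B" using psd_sqrt_unique[OF _ X _ U XU] Xc Xa by simp
  qed
qed

lemma trace_norm_hermitian:
  assumes "hermitian_mat n X" "unitary_mat n U" "X * U = U * dmat n d"
  shows "trace_norm X = (\<Sum>i<n. \<bar>d i\<bar>)"
  unfolding trace_norm_def abs_mat_hermitian[OF assms] mtrace_unitary_conj[OF assms(2) dmat_carrier]
  by (simp add: mtrace_dmat)


definition penrose_inverse :: "complex mat \<Rightarrow> complex mat \<Rightarrow> bool" where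
  "penrose_inverse A X \<longleftrightarrow> A * X * A = A \<and> X * A * X = X \<and>
     mat_adjoint (A * X) = A * X \<and> mat_adjoint (X * A) = X * A"

lemma penrose_inverse_unique:
  fixes A X Y :: "complex mat"
  assumes A: "A \<in> carrier_mat n n" and X: "X \<in> carrier_mat n n" and Y: "Y \<in> carrier_mat n n"
    and "penrose_inverse A X" "penrose_inverse A Y"
  shows "X = Y"
proof -
  note as = assoc_mult_mat[of _ n n _ n _ n] and sq = mult_carrier_mat[of _ n n _ n]
  have x: "A * X * A = A" "X * A * X = X" "mat_adjoint (A * X) = A * X" "mat_adjoint (X * A) = X * A"
    and y: "A * Y * A = A" "Y * A * Y = Y" "mat_adjoint (A * Y) = A * Y" "mat_adjoint (Y * A) = Y * A"
    using assms(4,5) unfolding penrose_inverse_def by auto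
  have ax: "mat_adjoint X * mat_adjoint A = A * X" using x(3) mat_adjoint_mult[OF A X] by simp
  have ay: "mat_adjoint Y * mat_adjoint A = A * Y" using y(3) mat_adjoint_mult[OF A Y] by simp
  have xa: "mat_adjoint A * mat_adjoint X = X * A" using x(4) mat_adjoint_mult[OF X A] by simp
  have ya: "mat_adjoint A * mat_adjoint Y = Y * A" using y(4) mat_adjoint_mult[OF Y A] by simp
  have A_adj: "mat_adjoint A * (mat_adjoint Z * (mat_adjoint A * W)) = mat_adjoint A * W"
    if Z: "Z \<in> carrier_mat n n" and z: "A * Z * A = A" and W: "W \<in> carrier_mat n n" for Z W
  proof -
    have "mat_adjoint A * mat_adjoint Z * mat_adjoint A = mat_adjoint A"
      using arg_cong[OF z, of mat_adjoint]
      unfolding mat_adjoint_mult[OF sq[OF A Z] A] mat_adjoint_mult[OF A Z] using A Z by (simp add: as)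
    then have "mat_adjoint A * mat_adjoint Z * mat_adjoint A * W = mat_adjoint A * W" by simp
    then show ?thesis using A Z W by (simp add: as sq)
  qed
  \<comment> \<open>Both \<open>X\<close> and \<open>Y\<close> equal \<open>X A Y\<close>.\<close>
  have "X = X * (A * X)" using x(2) A X by (simp add: as)
  also have "\<dots> = X * (mat_adjoint X * mat_adjoint A)" unfolding ax ..
  also have "\<dots> = X * (mat_adjoint X * (mat_adjoint A * (mat_adjoint Y * mat_adjoint A)))"
    using A_adj[OF Y y(1) one_carrier_mat] A Y by simp
  also have "\<dots> = X * ((A * X) * (A * Y))" using A X Y by (simp add: as sq flip: ax ay)
  also have "\<dots> = (X * A * X) * (A * Y)" using A X Y by (simp add: as sq)
  also have "\<dots> = X * (A * Y)" unfolding x(2) ..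
  also have "\<dots> = ((X * A) * (Y * A)) * Y" using y(2) A X Y by (simp add: as sq)
  also have "\<dots> = ((mat_adjoint A * mat_adjoint X) * (mat_adjoint A * mat_adjoint Y)) * Y"
    unfolding xa ya ..
  also have "\<dots> = (mat_adjoint A * mat_adjoint Y) * Y"
    using A_adj[OF X x(1) sq[OF mat_adjoint_carrier[OF Y] Y]] A X Y by (simp add: as sq)
  also have "\<dots> = Y" unfolding ya by (rule y(2))
  finally show ?thesis .
qed

lemma penrose_inverse_dmat: "penrose_inverse (dmat n d) (dmat n (\<lambda>i. inverse (d i)))"
proof -
  have inv: "d i * inverse (d i) * d i = d i" "inverse (d i) * d i * inverse (d i) = inverse (d i)" for i
    by (cases "d i = 0"; simp)+
  show ?thesis unfolding penrose_inverse_def dmat_mult_dmat mat_adjoint_dmat inv by simp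
qed

lemma penrose_inverse_unitary_conj:
  assumes U: "unitary_mat n U" and A: "A \<in> carrier_mat n n" and X: "X \<in> carrier_mat n n"
    and AX: "penrose_inverse A X"
  shows "penrose_inverse (U * A * mat_adjoint U) (U * X * mat_adjoint U)"
  using AX unfolding penrose_inverse_def
  by (simp add: unitary_conj_mult[OF U] unitary_conj_adjoint[OF U] A X mult_carrier_mat[of _ n n _ n])

lemma supp_inv_diagonalization:
  assumes S: "S \<in> carrier_mat n n" and U: "unitary_mat n U" and SU: "S * U = U * dmat n d"
  shows "supp_inv S = U * dmat n (\<lambda>i. inverse (d i)) * mat_adjoint U"
proof -
  note u = unitary_matD[OF U]
  let ?X = "U * dmat n (\<lambda>i. inverse (d i)) * mat_adjoint U"
  have X: "?X \<in> carrier_mat n n" using u by (meson dmat_carrier mult_carrier_mat)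
  have SX: "penrose_inverse S ?X"
    using penrose_inverse_unitary_conj[OF U dmat_carrier dmat_carrier penrose_inverse_dmat[of n d]]
    unfolding unitary_diagonalization(1)[OF S U dmat_carrier SU, symmetric] .
  show ?thesis unfolding supp_inv_def
  proof (rule the_equality)
    show "?X \<in> carrier_mat (dim_col S) (dim_row S) \<and> S * ?X * S = S \<and> ?X * S * ?X = ?X \<and>
        mat_adjoint (S * ?X) = S * ?X \<and> mat_adjoint (?X * S) = ?X * S"
      using X S SX unfolding penrose_inverse_def by simp
  next
    fix Y assume "Y \<in> carrier_mat (dim_col S) (dim_row S) \<and> S * Y * S = S \<and> Y * S * Y = Y \<and>
        mat_adjoint (S * Y) = S * Y \<and> mat_adjoint (Y * S) = Y * S"
    then show "Y = ?X"
      using penrose_inverse_unique[OF S _ X _ SX] S unfolding penrose_inverse_def by auto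
  qed
qed


section \<open>Scalar inequalities\<close>

lemma traceless_convex_comb_abs_le:
  fixes l c :: "nat \<Rightarrow> real"
  assumes ls: "(\<Sum>i<n. l i) = 0" and cn: "\<And>i. 0 \<le> c i" and cs: "(\<Sum>i<n. c i) = 1"
  shows "\<bar>\<Sum>i<n. l i * c i\<bar> \<le> (\<Sum>i<n. \<bar>l i\<bar>) / 2"
proof -
  have c1: "c i \<le> 1" if "i < n" for i
    using member_le_sum[of i "{..<n}" c] cn cs that by simp
  \<comment> \<open>As \<open>\<Sum> l = 0\<close>, the positive and the negative part of \<open>l\<close> both sum to \<open>\<Sum>|l|/2\<close>.\<close>
  have "(\<Sum>i<n. max (l i) 0) = (\<Sum>i<n. (\<bar>l i\<bar> + l i) / 2)" by (rule sum.cong) auto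
  then have pos: "(\<Sum>i<n. max (l i) 0) = (\<Sum>i<n. \<bar>l i\<bar>) / 2"
    using ls by (simp add: sum.distrib flip: sum_divide_distrib)
  have "(\<Sum>i<n. max (- l i) 0) = (\<Sum>i<n. (\<bar>l i\<bar> - l i) / 2)" by (rule sum.cong) auto
  then have neg: "(\<Sum>i<n. max (- l i) 0) = (\<Sum>i<n. \<bar>l i\<bar>) / 2"
    using ls by (simp add: sum_subtractf flip: sum_divide_distrib)
  have "(\<Sum>i<n. l i * c i) \<le> (\<Sum>i<n. max (l i) 0)"
  proof (rule sum_mono)
    fix i assume "i \<in> {..<n}"
    then show "l i * c i \<le> max (l i) 0"
      using c1[of i] cn[of i] by (cases "l i \<ge> 0") (auto simp: mult_left_le mult_nonpos_nonneg)
  qed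
  moreover have "(\<Sum>i<n. - max (- l i) 0) \<le> (\<Sum>i<n. l i * c i)"
  proof (rule sum_mono)
    fix i assume "i \<in> {..<n}"
    then have "- l i * c i \<le> max (- l i) 0"
      using mult_left_le[of "c i" "- l i"] mult_nonneg_nonneg[of "l i" "c i"] c1 cn
      by (cases "l i \<le> 0") auto
    then show "- max (- l i) 0 \<le> l i * c i" by simp
  qed
  ultimately show ?thesis using pos neg by (simp add: abs_le_iff sum_negf)
qed

lemma add_le_sq_divide_add:
  fixes x y :: real
  assumes x: "0 < x" and y: "0 < y"
  shows "x + y \<le> y^2 / x + x^2 / y"
proof -
  have "0 \<le> (x + y) * (x - y)^2" using x y by simp
  then have "x * y * (x + y) \<le> y^3 + x^3" by (simp add: power2_eq_square power3_eq_cube algebra_simps)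
  then show ?thesis using x y by (simp add: field_simps power2_eq_square power3_eq_cube)
qed

lemma pair_term_nonneg:
  fixes x y a :: real
  assumes "0 \<le> x" "0 \<le> y" "0 \<le> a" "x = 0 \<Longrightarrow> y * a = 0" "y = 0 \<Longrightarrow> x * a = 0"
  shows "0 \<le> (inverse x * y^2 - y) * a + (inverse y * x^2 - x) * a"
proof (cases "x = 0 \<or> y = 0")
  case True
  then show ?thesis using assms by auto
next
  case False
  then have "x + y \<le> y^2 / x + x^2 / y" using assms by (intro add_le_sq_divide_add) auto
  moreover have "(inverse x * y^2 - y) * a + (inverse y * x^2 - x) * a = (y^2 / x + x^2 / y - (x + y)) * a"
    by (simp add: divide_inverse algebra_simps)
  ultimately show ?thesis using assms(3) by simp
qed

lemma pair_coherence_bound: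
  fixes x y e :: real
  assumes x: "0 < x" and y: "0 < y" and xy: "x + y \<le> 1" and xe: "1 - e / 2 \<le> x" and e: "0 < e"
  shows "2 / e - 3 \<le> y^2 / x + x^2 / y - x - y"
proof (cases "e < 2 / 3")
  case False
  then have "2 / e - 3 \<le> 0" using e by (simp add: field_simps)
  then show ?thesis using add_le_sq_divide_add[OF x y] by simp
next
  case True
  define c where "c = 1 - x"
  have yc: "y \<le> c" using xy unfolding c_def by simp
  have c0: "0 < c" using y yc by simp
  have ce: "2 * c \<le> e" using xe unfolding c_def by simp
  have c3: "c < 1 / 3" using ce True by simp
  have cx: "c < x" using c3 unfolding c_def by simp
  \<comment> \<open>The right-hand side is \<open>(x + y)(x - y)\<^sup>2 / (x y)\<close>. For \<open>y \<le> c = 1 - x < x\<close> its numerator is at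
     least \<open>(x + c)(x - c)\<^sup>2\<close>, and \<open>(x + c)(x - c)\<^sup>2 c = (1 - 3c) x c + c\<^sup>3\<close>; this gives \<open>1/c - 3 \<ge> 2/e - 3\<close>.\<close>
  have g: "(x + c) * (x - c)^2 \<le> (x + y) * (x - y)^2"
  proof -
    have "(x + y) * (x - y)^2 - (x + c) * (x - c)^2 = (c - y) * (x^2 + x*(y+c) - (y^2 + y*c + c^2))"
      by (simp add: power2_eq_square algebra_simps)
    moreover have "0 \<le> (c - y) * (x^2 + x*(y+c) - (y^2 + y*c + c^2))"
    proof (rule mult_nonneg_nonneg)
      have "c^2 \<le> x^2" using cx c0 by (intro power_mono) auto
      moreover have "y^2 \<le> x * y" "y * c \<le> x * c"
        using cx c0 y yc by (simp_all add: power2_eq_square mult_right_mono)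
      ultimately show "0 \<le> x^2 + x*(y+c) - (y^2 + y*c + c^2)" by (simp add: algebra_simps)
    qed (use yc in simp)
    ultimately show ?thesis by linarith
  qed
  have "(1 - 3*c) * x * y \<le> (1 - 3*c) * x * c" using c3 x yc by (intro mult_left_mono) auto
  also have "\<dots> = (x + c) * (x - c)^2 * c - c^3"
    unfolding c_def by (simp add: power2_eq_square power3_eq_cube algebra_simps)
  also have "\<dots> \<le> (x + y) * (x - y)^2 * c"
  proof -
    have "(x + c) * (x - c)^2 * c \<le> (x + y) * (x - y)^2 * c" using g c0 by (intro mult_right_mono) auto
    moreover have "0 \<le> c^3" using c0 by simp
    ultimately show ?thesis by linarith
  qed
  finally have main: "(1 - 3*c) * x * y \<le> (x + y) * (x - y)^2 * c" .
  have "2 / e - 3 \<le> 1 / c - 3" using divide_left_mono[OF ce, of 2] c0 e by simp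
  also have "\<dots> = (1 - 3*c) / c" using c0 by (simp add: field_simps)
  also have "\<dots> \<le> (x + y) * (x - y)^2 / (x * y)"
    using main x y c0 by (simp add: divide_simps mult.commute mult.left_commute)
  also have "\<dots> = y^2 / x + x^2 / y - x - y" using x y by (simp add: field_simps power2_eq_square)
  finally show ?thesis .
qed

lemma pair_coherence_term_bound:
  fixes x y a e :: real
  assumes x: "0 \<le> x" and y: "0 \<le> y" and xy: "x + y \<le> 1" and xe: "1 - e / 2 \<le> x" and e: "0 < e"
    and a: "0 \<le> a" and supp: "x = 0 \<Longrightarrow> y * a = 0" "y = 0 \<Longrightarrow> x * a = 0"
  shows "(2 / e - 3) * a \<le> (inverse x * y^2 - y) * a + (inverse y * x^2 - x) * a"
proof (cases "x = 0 \<or> y = 0")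
  case True
  then have "x = 0 \<or> a = 0" using supp x by auto
  moreover have "2 / e - 3 \<le> 0" if "x = 0" using xe e that by (simp add: field_simps)
  ultimately have "(2 / e - 3) * a \<le> 0" using a by (auto simp: mult_nonpos_nonneg)
  then show ?thesis using pair_term_nonneg[OF x y a supp] by linarith
next
  case False
  then have "2 / e - 3 \<le> y^2 / x + x^2 / y - x - y"
    using x y by (intro pair_coherence_bound[OF _ _ xy xe e]) auto
  then have "(2 / e - 3) * a \<le> (y^2 / x + x^2 / y - x - y) * a" using a by (rule mult_right_mono)
  also have "\<dots> = (inverse x * y^2 - y) * a + (inverse y * x^2 - x) * a"
    by (simp add: divide_inverse algebra_simps)
  finally show ?thesis .
qed

lemma first_row_col_le_sum:
  fixes S :: "nat \<Rightarrow> nat \<Rightarrow> real"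
  assumes S: "\<And>i j. i < Suc m \<Longrightarrow> j < Suc m \<Longrightarrow> 0 \<le> S i j"
  shows "(\<Sum>j<m. S 0 (Suc j) + S (Suc j) 0) \<le> (\<Sum>i<Suc m. \<Sum>j<Suc m. S i j)"
proof -
  have "(\<Sum>j<m. S 0 (Suc j)) \<le> (\<Sum>j<Suc m. S 0 j)"
    unfolding sum.lessThan_Suc_shift[of "S 0"] using S[of 0 0] by simp
  moreover have "(\<Sum>i<m. S (Suc i) 0) \<le> (\<Sum>i<m. \<Sum>j<Suc m. S (Suc i) j)"
    by (rule sum_mono, rule member_le_sum) (use S in auto)
  moreover have "(\<Sum>i<Suc m. \<Sum>j<Suc m. S i j) = (\<Sum>j<Suc m. S 0 j) + (\<Sum>i<m. \<Sum>j<Suc m. S (Suc i) j)"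
    by (rule sum.lessThan_Suc_shift)
  ultimately show ?thesis unfolding sum.distrib by linarith
qed

lemma coherence_sum_lower_bound:
  fixes p :: "nat \<Rightarrow> real" and a :: "nat \<Rightarrow> nat \<Rightarrow> real" and e :: real
  assumes n: "0 < n" and pn: "\<And>i. i < n \<Longrightarrow> 0 \<le> p i" and ps: "(\<Sum>i<n. p i) = 1"
    and pl: "1 - e / 2 \<le> p 0" and e: "0 < e"
    and an: "\<And>i j. i < n \<Longrightarrow> j < n \<Longrightarrow> 0 \<le> a i j"
    and asym: "\<And>i j. i < n \<Longrightarrow> j < n \<Longrightarrow> a i j = a j i"
    and supp: "\<And>k j. k < n \<Longrightarrow> j < n \<Longrightarrow> p k = 0 \<Longrightarrow> p j * a k j = 0"
  shows "((\<Sum>j<n. a 0 j) - a 0 0) * (2 / e - 3) \<le>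
    (\<Sum>i<n. \<Sum>j<n. inverse (p i) * (p j)^2 * a i j) - (\<Sum>i<n. \<Sum>j<n. p i * a i j)"
proof -
  obtain m where m: "n = Suc m" using n by (cases n) auto
  define T where "T i j = inverse (p i) * (p j)^2 * a i j - p j * a i j" for i j
  have "(\<Sum>i<n. \<Sum>j<n. p i * a i j) = (\<Sum>i<n. \<Sum>j<n. p j * a i j)"
    by (subst sum.swap) (auto intro!: sum.cong simp: asym)
  then have "(\<Sum>i<n. \<Sum>j<n. inverse (p i) * (p j)^2 * a i j) - (\<Sum>i<n. \<Sum>j<n. p i * a i j)
      = (\<Sum>i<n. \<Sum>j<n. T i j)"
    unfolding T_def by (simp add: sum_subtractf)
  also have "\<dots> = (\<Sum>i<n. \<Sum>j<n. (T i j + T j i) / 2)"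
    using sum.swap[of "\<lambda>i j. T j i" "{..<n}" "{..<n}"] by (simp add: sum.distrib flip: sum_divide_distrib)
  finally have rhs: "(\<Sum>i<n. \<Sum>j<n. inverse (p i) * (p j)^2 * a i j) - (\<Sum>i<n. \<Sum>j<n. p i * a i j)
      = (\<Sum>i<n. \<Sum>j<n. (T i j + T j i) / 2)" .
  have pair: "T i j + T j i = (inverse (p i) * (p j)^2 - p j) * a i j + (inverse (p j) * (p i)^2 - p i) * a i j"
    if "i < n" "j < n" for i j
    unfolding T_def using asym[OF that] by (simp add: algebra_simps)
  have "0 \<le> T i j + T j i" if "i < n" "j < n" for i j
    unfolding pair[OF that] using that pn an supp[of i j] supp[of j i] asym[OF that]
    by (intro pair_term_nonneg) auto
  then have row: "(\<Sum>j<m. (T 0 (Suc j) + T (Suc j) 0) / 2 + (T (Suc j) 0 + T 0 (Suc j)) / 2)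
      \<le> (\<Sum>i<n. \<Sum>j<n. (T i j + T j i) / 2)"
    unfolding m by (intro first_row_col_le_sum) auto
  have "(2 / e - 3) * a 0 (Suc j) \<le> T 0 (Suc j) + T (Suc j) 0" if j: "j < m" for j
  proof -
    have J: "Suc j < n" using j m by simp
    have "p 0 + p (Suc j) \<le> (\<Sum>i<n. p i)"
      using sum_mono2[of "{..<n}" "{0, Suc j}" p] J n pn by auto
    then show ?thesis
      unfolding pair[OF n J] using pn[OF n] pn[OF J] ps pl e an[OF n J] supp[OF n J] supp[OF J n] asym[OF n J]
      by (intro pair_coherence_term_bound) auto
  qed
  then have "(\<Sum>j<m. a 0 (Suc j) * (2 / e - 3)) \<le> (\<Sum>j<m. T 0 (Suc j) + T (Suc j) 0)"
    by (intro sum_mono) (simp add: mult.commute)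
  moreover have "(\<Sum>j<n. a 0 j) - a 0 0 = (\<Sum>j<m. a 0 (Suc j))"
    unfolding m sum.lessThan_Suc_shift by simp
  ultimately have "((\<Sum>j<n. a 0 j) - a 0 0) * (2 / e - 3) \<le> (\<Sum>j<m. T 0 (Suc j) + T (Suc j) 0)"
    by (simp add: sum_distrib_right)
  with row show ?thesis unfolding rhs by (simp add: add.commute)
qed


section \<open>Fidelity of the top eigenvector\<close>

lemma ket_bra_carrier: "\<psi> \<in> carrier_vec n \<Longrightarrow> ket_bra \<psi> \<in> carrier_mat n n"
  unfolding ket_bra_def by auto

lemma ket_bra_index: "\<psi> \<in> carrier_vec n \<Longrightarrow> i < n \<Longrightarrow> j < n \<Longrightarrow> ket_bra \<psi> $$ (i,j) = \<psi> $ i * cnj (\<psi> $ j)"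
  unfolding ket_bra_def by auto

lemma ket_bra_adjoint:
  assumes "\<psi> \<in> carrier_vec n"
  shows "mat_adjoint (ket_bra \<psi>) = ket_bra \<psi>"
  using ket_bra_carrier[OF assms] by (intro eq_matI) (auto simp: ket_bra_index[OF assms] mult.commute)

lemma ket_bra_trace:
  assumes "\<psi> \<in> carrier_vec n"
  shows "mtrace (ket_bra \<psi>) = \<psi> \<bullet>c \<psi>"
  unfolding mtrace_carrier[OF ket_bra_carrier[OF assms]] cscalar_prod_sum[OF assms assms]
  by (simp add: ket_bra_index[OF assms])

lemma ket_bra_quadratic_form:
  assumes p: "\<psi> \<in> carrier_vec n" and v: "v \<in> carrier_vec n"
  shows "(ket_bra \<psi> *\<^sub>v v) \<bullet>c v = of_real ((cmod (v \<bullet>c \<psi>))^2)"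
proof -
  have K: "ket_bra \<psi> \<in> carrier_mat n n" by (rule ket_bra_carrier[OF p])
  have Kv: "ket_bra \<psi> *\<^sub>v v = (v \<bullet>c \<psi>) \<cdot>\<^sub>v \<psi>"
  proof (rule eq_vecI)
    fix i assume "i < dim_vec ((v \<bullet>c \<psi>) \<cdot>\<^sub>v \<psi>)"
    then have i: "i < n" using p by simp
    have "(ket_bra \<psi> *\<^sub>v v) $ i = (\<Sum>a<n. \<psi> $ i * (v $ a * cnj (\<psi> $ a)))"
      unfolding index_mult_mat_vec_sum[OF K v i]
      by (rule sum.cong[OF refl]) (simp add: ket_bra_index[OF p i] mult_ac)
    then show "(ket_bra \<psi> *\<^sub>v v) $ i = ((v \<bullet>c \<psi>) \<cdot>\<^sub>v \<psi>) $ i"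
      using i p by (simp add: cscalar_prod_sum[OF v p] sum_distrib_left mult.commute del: index_mult_mat_vec)
  qed (use K p in auto)
  have "(ket_bra \<psi> *\<^sub>v v) \<bullet>c v = (v \<bullet>c \<psi>) * cnj (v \<bullet>c \<psi>)"
    unfolding Kv using cscalar_prod_smult[OF p v, of "v \<bullet>c \<psi>" 1] cscalar_prod_cnj_commute[OF p v] by simp
  then show ?thesis by (simp add: complex_norm_square[symmetric])
qed

lemma traceless_hermitian_quadratic_form_bound:
  assumes X: "hermitian_mat n X" and tr: "mtrace X = 0"
    and x: "x \<in> carrier_vec n" "x \<bullet>c x = 1"
  shows "\<bar>Re ((X *\<^sub>v x) \<bullet>c x)\<bar> \<le> trace_norm X / 2"
proof -
  have Xc: "X \<in> carrier_mat n n" using X unfolding hermitian_mat_def by simp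
  obtain V lam where V: "unitary_mat n V" and XV: "X * V = V * dmat n lam"
    using hermitian_diagonalizable[OF X] by blast
  obtain c where c: "\<And>i. 0 \<le> c i" "(\<Sum>i<n. c i) = 1" and Xx: "(X *\<^sub>v x) \<bullet>c x = of_real (\<Sum>i<n. lam i * c i)"
    using diagonalized_quadratic_form[OF Xc V XV x(1)] x(2) by (metis one_complex.sel(1))
  have "(\<Sum>i<n. lam i) = 0" using mtrace_diagonalization[OF Xc V XV] tr by (simp flip: of_real_sum)
  from traceless_convex_comb_abs_le[OF this c]
  show ?thesis unfolding Xx trace_norm_hermitian[OF X V XV] by simp
qed

lemma quadratic_form_le_largest_eigenvalue:
  assumes A: "hermitian_mat n A"
    and largest: "\<And>\<mu> w. eigenvector A w \<mu> \<Longrightarrow> Re \<mu> \<le> Re l"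
    and v: "v \<in> carrier_vec n" "v \<bullet>c v = 1"
  shows "Re ((A *\<^sub>v v) \<bullet>c v) \<le> Re l"
proof -
  have Ac: "A \<in> carrier_mat n n" using A unfolding hermitian_mat_def by simp
  obtain U d where U: "unitary_mat n U" and AU: "A * U = U * dmat n d"
    using hermitian_diagonalizable[OF A] by blast
  have "d i \<le> Re l" if i: "i < n" for i
  proof -
    have "col U i \<noteq> 0\<^sub>v n" using unitary_mat_col[OF U i] by auto
    then have "eigenvector A (col U i) (of_real (d i))"
      unfolding eigenvector_def using diagonalization_col_eigen[OF Ac unitary_matD(1)[OF U] AU i]
        unitary_matD(1)[OF U] Ac i by simp
    from largest[OF this] show ?thesis by simp
  qed
  moreover obtain c where "\<And>i. 0 \<le> c i" "(\<Sum>i<n. c i) = 1"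
    "(A *\<^sub>v v) \<bullet>c v = of_real (\<Sum>i<n. d i * c i)"
    using diagonalized_quadratic_form[OF Ac U AU v(1)] v(2) by (metis one_complex.sel(1))
  ultimately have "Re ((A *\<^sub>v v) \<bullet>c v) \<le> (\<Sum>i<n. Re l * c i)"
    by (auto intro!: sum_mono mult_right_mono)
  also have "\<dots> = Re l" using \<open>(\<Sum>i<n. c i) = 1\<close> by (simp flip: sum_distrib_left)
  finally show ?thesis .
qed


lemma largest_eigenvector_fidelity:
  assumes psi: "unit_state n \<psi>" and sigma: "density_op n \<sigma>"
    and close: "trace_norm (ket_bra \<psi> - \<sigma>) \<le> \<epsilon>"
    and phi: "unit_state n \<phi>" "eigenvector \<sigma> \<phi> l"
    and largest: "\<And>\<mu> w. eigenvector \<sigma> w \<mu> \<Longrightarrow> Re \<mu> \<le> Re l"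
  shows "1 - \<epsilon> / 2 \<le> Re l" "1 - \<epsilon> \<le> (cmod (\<phi> \<bullet>c \<psi>))^2"
proof -
  have psi_c: "\<psi> \<in> carrier_vec n" and psi1: "\<psi> \<bullet>c \<psi> = 1" using psi unfolding unit_state_def by auto
  have phi_c: "\<phi> \<in> carrier_vec n" and phi1: "\<phi> \<bullet>c \<phi> = 1" using phi(1) unfolding unit_state_def by auto
  have sig_h: "hermitian_mat n \<sigma>" and tr1: "mtrace \<sigma> = 1"
    using sigma unfolding density_op_def psd_mat_def by auto
  have sig_c: "\<sigma> \<in> carrier_mat n n" and sig_a: "mat_adjoint \<sigma> = \<sigma>"
    using sig_h unfolding hermitian_mat_def by auto
  have K: "ket_bra \<psi> \<in> carrier_mat n n" by (rule ket_bra_carrier[OF psi_c])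
  define X where "X = ket_bra \<psi> - \<sigma>"
  have X: "hermitian_mat n X"
    unfolding hermitian_mat_def X_def
    using minus_carrier_mat[OF sig_c] mat_adjoint_minus[OF K sig_c] ket_bra_adjoint[OF psi_c] sig_a by simp
  have trX: "mtrace X = 0"
    unfolding X_def mtrace_minus[OF K sig_c] ket_bra_trace[OF psi_c] psi1 tr1 by simp
  have bound: "\<bar>(cmod (x \<bullet>c \<psi>))^2 - Re ((\<sigma> *\<^sub>v x) \<bullet>c x)\<bar> \<le> \<epsilon> / 2"
    if x: "x \<in> carrier_vec n" "x \<bullet>c x = 1" for x
  proof -
    have "(X *\<^sub>v x) \<bullet>c x = (ket_bra \<psi> *\<^sub>v x) \<bullet>c x - (\<sigma> *\<^sub>v x) \<bullet>c x"
      unfolding X_def minus_mult_distrib_mat_vec[OF K sig_c x(1)]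
      by (rule cscalar_prod_minus[OF mult_mat_vec_carrier[OF K x(1)] mult_mat_vec_carrier[OF sig_c x(1)] x(1)])
    then have "Re ((X *\<^sub>v x) \<bullet>c x) = (cmod (x \<bullet>c \<psi>))^2 - Re ((\<sigma> *\<^sub>v x) \<bullet>c x)"
      by (simp add: ket_bra_quadratic_form[OF psi_c x(1)])
    then show ?thesis
      using traceless_hermitian_quadratic_form_bound[OF X trX x] close unfolding X_def by simp
  qed
  have "\<bar>1 - Re ((\<sigma> *\<^sub>v \<psi>) \<bullet>c \<psi>)\<bar> \<le> \<epsilon> / 2"
    using bound[OF psi_c psi1] psi1 by simp
  then have "1 - Re ((\<sigma> *\<^sub>v \<psi>) \<bullet>c \<psi>) \<le> \<epsilon> / 2" by (rule abs_le_D1)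
  moreover have "Re ((\<sigma> *\<^sub>v \<psi>) \<bullet>c \<psi>) \<le> Re l"
    by (rule quadratic_form_le_largest_eigenvalue[OF sig_h _ psi_c psi1]) (rule largest)
  ultimately show Rl: "1 - \<epsilon> / 2 \<le> Re l" by simp
  have "(\<sigma> *\<^sub>v \<phi>) \<bullet>c \<phi> = l"
    using phi(2) cscalar_prod_smult[OF phi_c phi_c, of l 1] phi1 unfolding eigenvector_def by simp
  then have "\<bar>(cmod (\<phi> \<bullet>c \<psi>))^2 - Re l\<bar> \<le> \<epsilon> / 2" using bound[OF phi_c phi1] by simp
  then have "- ((cmod (\<phi> \<bullet>c \<psi>))^2 - Re l) \<le> \<epsilon> / 2" by (rule abs_le_D2)
  then show "1 - \<epsilon> \<le> (cmod (\<phi> \<bullet>c \<psi>))^2" using Rl by simp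
qed

lemma density_op_eigenvalues:
  assumes sigma: "density_op n \<sigma>" and U: "unitary_mat n U" and sU: "\<sigma> * U = U * dmat n p"
  shows "\<And>i. i < n \<Longrightarrow> 0 \<le> p i" "(\<Sum>i<n. p i) = 1"
proof -
  have sig_c: "\<sigma> \<in> carrier_mat n n" and tr1: "mtrace \<sigma> = 1"
    and pos: "\<And>v. v \<in> carrier_vec n \<Longrightarrow> 0 \<le> Re ((\<sigma> *\<^sub>v v) \<bullet>c v)"
    using sigma unfolding density_op_def psd_mat_def hermitian_mat_def by auto
  note u = unitary_matD[OF U]
  show "0 \<le> p i" if i: "i < n" for i
  proof -
    have "(\<sigma> *\<^sub>v col U i) \<bullet>c col U i = complex_of_real (p i)"
      using diagonalization_col_eigen[OF sig_c u(1) sU i] unitary_mat_col[OF U i] u(1) i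
        cscalar_prod_smult[of "col U i" n "col U i" "complex_of_real (p i)" 1] by simp
    then show ?thesis using pos[of "col U i"] u(1) i by simp
  qed
  show "(\<Sum>i<n. p i) = 1"
    using mtrace_diagonalization[OF sig_c U sU] tr1 by (metis of_real_eq_1_iff)
qed

section \<open>Purity of coherence in the eigenbasis\<close>

lemma hermitian_index_mult_swap:
  assumes "hermitian_mat n K" "i < n" "j < n"
  shows "K $$ (i,j) * K $$ (j,i) = of_real ((cmod (K $$ (i,j)))^2)"
  unfolding hermitian_mat_index[OF assms(1) assms(3,2)] by (rule complex_norm_square[symmetric])

lemma hermitian_sandwich_dmat_diag:
  assumes K: "hermitian_mat n K" and i: "i < n"
  shows "(K * dmat n q * K) $$ (i,i) = of_real (\<Sum>j<n. q j * (cmod (K $$ (i,j)))^2)"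
proof -
  have Kc: "K \<in> carrier_mat n n" using K unfolding hermitian_mat_def by simp
  have "(K * dmat n q * K) $$ (i,i) = (\<Sum>j<n. (K * dmat n q) $$ (i,j) * K $$ (j,i))"
    by (rule index_mult_mat_sum[OF mult_carrier_mat[OF Kc dmat_carrier] Kc i i])
  also have "\<dots> = (\<Sum>j<n. of_real (q j * (cmod (K $$ (i,j)))^2))"
  proof (rule sum.cong[OF refl])
    fix j assume "j \<in> {..<n}"
    then have j: "j < n" by simp
    have "(K * dmat n q) $$ (i,j) * K $$ (j,i) = of_real (q j) * (K $$ (i,j) * K $$ (j,i))"
      using index_mult_dmat_right[OF Kc i j] by simp
    then show "(K * dmat n q) $$ (i,j) * K $$ (j,i) = of_real (q j * (cmod (K $$ (i,j)))^2)"
      unfolding hermitian_index_mult_swap[OF K i j] by simp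
  qed
  finally show ?thesis by simp
qed

lemma dmat_const_one: "dmat n (\<lambda>_. 1) = 1\<^sub>m n"
  by (rule eq_matI) (auto simp: dmat_index)


lemma purity_coh_trace_eigenbasis:
  assumes sig: "hermitian_mat n \<sigma>" and H: "hermitian_mat n H"
    and U: "unitary_mat n U" and sU: "\<sigma> * U = U * dmat n p"
  defines "K \<equiv> mat_adjoint U * H * U"
  shows "Re (mtrace (H * \<sigma> * \<sigma> * H * supp_inv \<sigma>) - mtrace (\<sigma> * (H * H))) =
    (\<Sum>i<n. \<Sum>j<n. inverse (p i) * (p j)^2 * (cmod (K $$ (i,j)))^2)
      - (\<Sum>i<n. \<Sum>j<n. p i * (cmod (K $$ (i,j)))^2)"
proof -
  note u = unitary_matD[OF U] and sq = mult_carrier_mat[of _ n n _ n]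
  have sig_c: "\<sigma> \<in> carrier_mat n n" using sig unfolding hermitian_mat_def by simp
  have Hc: "H \<in> carrier_mat n n" using H unfolding hermitian_mat_def by simp
  have K: "hermitian_mat n K" unfolding K_def by (rule hermitian_unitary_conj[OF H U])
  then have Kc: "K \<in> carrier_mat n n" unfolding hermitian_mat_def by simp
  define D where "D = dmat n p"
  define E where "E = dmat n (\<lambda>i. inverse (p i))"
  have Dc: "D \<in> carrier_mat n n" and Ec: "E \<in> carrier_mat n n" unfolding D_def E_def by auto
  have sD: "\<sigma> = U * D * mat_adjoint U"
    unfolding D_def by (rule unitary_diagonalization(1)[OF sig_c U dmat_carrier sU])
  have HK: "H = U * K * mat_adjoint U" unfolding K_def by (rule unitary_conj_cancel(2)[OF U Hc, symmetric])
  have sinv: "supp_inv \<sigma> = U * E * mat_adjoint U"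
    unfolding E_def by (rule supp_inv_diagonalization[OF sig_c U sU])
  have "mtrace (H * \<sigma> * \<sigma> * H * supp_inv \<sigma>) = mtrace (K * D * D * K * E)"
    unfolding sinv unfolding sD HK
    by (simp only: unitary_conj_mult[OF U] Kc Dc Ec sq mtrace_unitary_conj[OF U])
  also have "K * D * D * K = K * dmat n (\<lambda>j. (p j)^2) * K"
    unfolding D_def assoc_mult_mat[OF Kc dmat_carrier dmat_carrier] dmat_mult_dmat
    by (simp add: power2_eq_square)
  also have "mtrace (K * dmat n (\<lambda>j. (p j)^2) * K * E)
      = of_real (\<Sum>i<n. \<Sum>j<n. inverse (p i) * (p j)^2 * (cmod (K $$ (i,j)))^2)"
    unfolding mtrace_carrier[OF sq[OF sq[OF sq[OF Kc dmat_carrier] Kc] Ec]] unfolding E_def of_real_sum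
    by (rule sum.cong[OF refl])
      (simp add: index_mult_dmat_right[OF sq[OF sq[OF Kc dmat_carrier] Kc]]
        hermitian_sandwich_dmat_diag[OF K] sum_distrib_left mult_ac del: index_mult_mat)
  finally have tr1: "mtrace (H * \<sigma> * \<sigma> * H * supp_inv \<sigma>)
      = of_real (\<Sum>i<n. \<Sum>j<n. inverse (p i) * (p j)^2 * (cmod (K $$ (i,j)))^2)" .
  have "mtrace (\<sigma> * (H * H)) = mtrace (D * (K * dmat n (\<lambda>_. 1) * K))"
    unfolding sD HK dmat_const_one
    by (simp only: unitary_conj_mult[OF U] Kc Dc sq mtrace_unitary_conj[OF U] right_mult_one_mat[OF Kc])
  also have "\<dots> = of_real (\<Sum>i<n. \<Sum>j<n. p i * (cmod (K $$ (i,j)))^2)"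
    unfolding mtrace_carrier[OF sq[OF Dc sq[OF sq[OF Kc dmat_carrier] Kc]]] unfolding D_def of_real_sum
    by (rule sum.cong[OF refl])
      (simp add: index_mult_dmat_left[OF sq[OF sq[OF Kc dmat_carrier] Kc]]
        hermitian_sandwich_dmat_diag[OF K] sum_distrib_left del: index_mult_mat)
  finally show ?thesis unfolding tr1 by (simp only: of_real_diff[symmetric] Re_complex_of_real)
qed


lemma support_condition_eigenbasis:
  assumes sig: "hermitian_mat n \<sigma>" and H: "hermitian_mat n H"
    and U: "unitary_mat n U" and sU: "\<sigma> * U = U * dmat n p"
    and pn: "\<And>i. i < n \<Longrightarrow> 0 \<le> p i"
    and supp: "mat_support (H * \<sigma> * H) \<subseteq> mat_support \<sigma>"
    and k: "k < n" "p k = 0" and j: "j < n"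
  defines "K \<equiv> mat_adjoint U * H * U"
  shows "p j * (cmod (K $$ (k,j)))^2 = 0"
proof -
  note u = unitary_matD[OF U] and sq = mult_carrier_mat[of _ n n _ n]
  have sig_c: "\<sigma> \<in> carrier_mat n n" and sig_a: "mat_adjoint \<sigma> = \<sigma>"
    using sig unfolding hermitian_mat_def by auto
  have Hc: "H \<in> carrier_mat n n" using H unfolding hermitian_mat_def by simp
  have K: "hermitian_mat n K" unfolding K_def by (rule hermitian_unitary_conj[OF H U])
  then have Kc: "K \<in> carrier_mat n n" unfolding hermitian_mat_def by simp
  have HsH: "H * \<sigma> * H \<in> carrier_mat n n" using Hc sig_c by (simp add: sq)
  have ck: "col U k \<in> carrier_vec n" using u(1) k by simp
  \<comment> \<open>\<open>H \<sigma> H\<close> maps the kernel vector \<open>col U k\<close> of \<open>\<sigma>\<close> into the range of \<open>\<sigma>\<close>, which is orthogonal to it.\<close>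
  have "H * \<sigma> * H *\<^sub>v col U k \<in> mat_support (H * \<sigma> * H)"
    unfolding mat_support_def using HsH ck by (intro CollectI exI[of _ "col U k"]) auto
  with supp obtain w where w: "w \<in> carrier_vec n" and hw: "H * \<sigma> * H *\<^sub>v col U k = \<sigma> *\<^sub>v w"
    unfolding mat_support_def using sig_c by auto
  have "(H * \<sigma> * H *\<^sub>v col U k) \<bullet>c col U k = w \<bullet>c (\<sigma> *\<^sub>v col U k)"
    unfolding hw using cscalar_prod_mat_adjoint[OF sig_c w ck] sig_a by simp
  also have "\<sigma> *\<^sub>v col U k = 0 \<cdot>\<^sub>v col U k" using diagonalization_col_eigen[OF sig_c u(1) sU k(1)] k(2) by simp
  also have "w \<bullet>c (0 \<cdot>\<^sub>v col U k) = 0" using cscalar_prod_smult[OF w ck, of 1 0] by simp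
  finally have "(H * \<sigma> * H *\<^sub>v col U k) \<bullet>c col U k = 0" .
  moreover have "mat_adjoint U * (H * \<sigma> * H) * U = K * dmat n p * K"
    unfolding unitary_diagonalization(1)[OF sig_c U dmat_carrier sU]
      unitary_conj_cancel(2)[OF U Hc, symmetric, folded K_def]
    by (simp only: unitary_conj_mult[OF U] Kc dmat_carrier sq unitary_conj_cancel(1)[OF U])
  ultimately have "(K * dmat n p * K) $$ (k,k) = 0"
    using unitary_conj_diag_index[OF u(1) HsH k(1)] by simp
  then have "(\<Sum>i<n. p i * (cmod (K $$ (k,i)))^2) = 0"
    unfolding hermitian_sandwich_dmat_diag[OF K k(1)] by (simp only: of_real_eq_0_iff)
  then show ?thesis
    using j pn by (subst (asm) sum_nonneg_eq_0_iff) auto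
qed


lemma variance_H_eigenbasis:
  assumes H: "hermitian_mat n H" and U: "unitary_mat n U" and n: "0 < n"
  defines "K \<equiv> mat_adjoint U * H * U"
  shows "variance_H H (col U 0) = (\<Sum>j<n. (cmod (K $$ (0,j)))^2) - (cmod (K $$ (0,0)))^2"
proof -
  note u = unitary_matD[OF U] and sq = mult_carrier_mat[of _ n n _ n]
  have Hc: "H \<in> carrier_mat n n" using H unfolding hermitian_mat_def by simp
  have K: "hermitian_mat n K" unfolding K_def by (rule hermitian_unitary_conj[OF H U])
  then have Kc: "K \<in> carrier_mat n n" unfolding hermitian_mat_def by simp
  have "mat_adjoint U * (H * H) * U = K * dmat n (\<lambda>_. 1) * K"
    unfolding unitary_conj_cancel(2)[OF U Hc, symmetric, folded K_def] dmat_const_one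
    by (simp only: unitary_conj_mult[OF U] Kc sq unitary_conj_cancel(1)[OF U] right_mult_one_mat[OF Kc])
  then have "((H * H) *\<^sub>v col U 0) \<bullet>c col U 0 = of_real (\<Sum>j<n. (cmod (K $$ (0,j)))^2)"
    using unitary_conj_diag_index[OF u(1) sq[OF Hc Hc] n] hermitian_sandwich_dmat_diag[OF K n] by simp
  moreover have "(H *\<^sub>v col U 0) \<bullet>c col U 0 = K $$ (0,0)"
    using unitary_conj_diag_index[OF u(1) Hc n] unfolding K_def by simp
  moreover have "(K $$ (0,0))^2 = of_real ((cmod (K $$ (0,0)))^2)"
    using hermitian_index_mult_swap[OF K n n] by (simp add: power2_eq_square)
  ultimately show ?thesis unfolding variance_H_def by simp
qed


lemma purity_coh_lower_bound:
  assumes sigma: "density_op n \<sigma>" and H: "hermitian_mat n H"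
    and U: "unitary_mat n U" and sU: "\<sigma> * U = U * dmat n p"
    and p0: "1 - \<epsilon> / 2 \<le> p 0" and eps: "0 < \<epsilon>" and n: "0 < n"
  shows "ereal (variance_H H (col U 0) * (2 / \<epsilon> - 3)) \<le> purity_coh H \<sigma>"
proof (cases "mat_support (H * \<sigma> * H) \<subseteq> mat_support \<sigma>")
  case False
  then show ?thesis unfolding purity_coh_def by simp
next
  case True
  define K where "K = mat_adjoint U * H * U"
  have sig: "hermitian_mat n \<sigma>" using sigma unfolding density_op_def psd_mat_def by simp
  have K: "hermitian_mat n K" unfolding K_def by (rule hermitian_unitary_conj[OF H U])
  note p = density_op_eigenvalues[OF sigma U sU]
  have "((\<Sum>j<n. (cmod (K $$ (0,j)))^2) - (cmod (K $$ (0,0)))^2) * (2 / \<epsilon> - 3) \<le>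
      (\<Sum>i<n. \<Sum>j<n. inverse (p i) * (p j)^2 * (cmod (K $$ (i,j)))^2)
        - (\<Sum>i<n. \<Sum>j<n. p i * (cmod (K $$ (i,j)))^2)"
  proof (rule coherence_sum_lower_bound[OF n p p0 eps])
    show "(cmod (K $$ (i,j)))^2 = (cmod (K $$ (j,i)))^2" if "i < n" "j < n" for i j
      using hermitian_mat_index[OF K that] by simp
    show "p j * (cmod (K $$ (k,j)))^2 = 0" if "k < n" "j < n" "p k = 0" for k j
      using support_condition_eigenbasis[OF sig H U sU p(1) True that(1,3,2)] unfolding K_def .
  qed auto
  then show ?thesis
    using True purity_coh_trace_eigenbasis[OF sig H U sU] variance_H_eigenbasis[OF H U n]
    unfolding purity_coh_def K_def by simp
qed


theorem mainTheorem18: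
  fixes n :: nat and \<psi> \<phi> :: "complex vec" and \<sigma> H :: "complex mat"
    and \<epsilon> :: real and l :: complex
  assumes psi: "unit_state n \<psi>"
    and sigma: "density_op n \<sigma>"
    and herm: "hermitian_mat n H"
    and eps: "0 < \<epsilon>"
    and close: "trace_norm (ket_bra \<psi> - \<sigma>) \<le> \<epsilon>"
    and phi: "unit_state n \<phi>" "eigenvector \<sigma> \<phi> l"
    and largest: "\<And>\<mu> w. eigenvector \<sigma> w \<mu> \<Longrightarrow> Re \<mu> \<le> Re l"
  shows "(cmod (\<phi> \<bullet>c \<psi>))^2 \<ge> 1 - \<epsilon> \<and>
         purity_coh H \<sigma> \<ge> ereal (variance_H H \<phi> * (2 / \<epsilon> - 3))"
proof
  note fidelity = largest_eigenvector_fidelity[OF psi sigma close phi largest]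
  show "(cmod (\<phi> \<bullet>c \<psi>))^2 \<ge> 1 - \<epsilon>" by (rule fidelity(2))
  have phi_c: "\<phi> \<in> carrier_vec n" and phi1: "\<phi> \<bullet>c \<phi> = 1" using phi(1) unfolding unit_state_def by auto
  have sig: "hermitian_mat n \<sigma>" using sigma unfolding density_op_def psd_mat_def by simp
  have sig_phi: "\<sigma> *\<^sub>v \<phi> = l \<cdot>\<^sub>v \<phi>" using phi(2) unfolding eigenvector_def by simp
  obtain U p where U: "unitary_mat n U" and sU: "\<sigma> * U = U * dmat n p" and U0: "col U 0 = \<phi>"
    using hermitian_diagonalizable_eigenvector[OF sig phi_c phi1 sig_phi] by blast
  have n: "0 < n" using phi_c phi1 by (cases n) (auto simp: cscalar_prod_sum)
  have sig_c: "\<sigma> \<in> carrier_mat n n" using sig unfolding hermitian_mat_def by simp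
  have sig_phi0: "\<sigma> *\<^sub>v \<phi> = complex_of_real (p 0) \<cdot>\<^sub>v \<phi>"
    using diagonalization_col_eigen[OF sig_c unitary_matD(1)[OF U] sU n] unfolding U0 .
  have "l = (\<sigma> *\<^sub>v \<phi>) \<bullet>c \<phi>"
    unfolding sig_phi cscalar_prod_smult_left[OF phi_c phi_c] phi1 by simp
  also have "\<dots> = of_real (p 0)"
    unfolding sig_phi0 cscalar_prod_smult_left[OF phi_c phi_c] phi1 by simp
  finally have "1 - \<epsilon> / 2 \<le> p 0" using fidelity(1) by simp
  from purity_coh_lower_bound[OF sigma herm U sU this eps n]
  show "purity_coh H \<sigma> \<ge> ereal (variance_H H \<phi> * (2 / \<epsilon> - 3))" unfolding U0 .
qed

end
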